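(* Let $L=1$ and $\vec m=(a,b)\in\mathcal R^2$ be arbitrary. For every topological space $X$, all $k\in\mathbb N$, $n\ge0$ and every cycle $u\in\mathcal K_n(X)$ (i.e. $\partial_n(u)=0$), the following equalities hold in ${}_{\vec m}\mathcal H_n(X)$: $$[a^k\,\mathcal{SD}_n^{(k)}(u)]=[b^k u],\qquad [b^k\,\mathcal{SD}_n^{(k)}(u)]=[a^k u],$$ where $\mathcal{SD}_n^{(k)}$ denotes the $k$-fold composite of $\mathcal{SD}_n$.
   Context: $\mathcal R$ is a commutative ring with unit. $\mathcal S_n(X)$ = continuous maps $[0,1]^n\to X$ ($[0,1]^0=\{0\}$), $\mathcal K_n(X)$ the free $\mathcal R$-module on $\mathcal S_n(X)$, $\mathcal K_{-1}(X)=0$. Boundary: for $n\ge1$, $\partial_n(T)=\sum_{j=1}^n(-1)^{j+1}(a\langle T\rangle_{n,0,j}+b\langle T\rangle_{n,1,j})$ where $\langle T\rangle_{n,i,j}(x_1,\dots,x_{n-1})=T(x_1,\dots,x_{j-1},i,x_j,\dots,x_{n-1})$ ($\langle T\rangle_{1,i,1}(0)=T(i)$), extended linearly, $\partial_0=0$; ${}_{\vec m}\mathcal H_n(X)=\ker\partial_n/\operatorname{im}\partial_{n+1}$ and $[u]$ is the class of a cycle $u$. Subdivision maps ($\mathcal R$-linear): $\mathcal{SD}_0(T)=-T$ and for $n\ge1$, $\mathcal{SD}_n(T)=\sum_{\vec e\in\{0,2\}^n}\sum_{\vec v\in\mathcal V_{\vec e,n}}(-\prod_iv_i)\,T\circ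 h_{\vec e,\vec v}$, where $\mathcal V_{\vec e,n}$ is the set of $\vec v\in\{-1,1\}^n$ with $v_i=1$ whenever $e_i=0$, and $h_{\vec e,\vec v}(x)_i=\frac13(e_i+v_ix_i)$. *)

theory Defs
  imports "HOL-Analysis.Analysis"
begin

text \<open>Points of [0,1]^n are encoded as functions nat => real, coordinates x_1..x_n
  being x 0 .. x (n-1), all further coordinates being 0. [0,1]^0 = {0}.\<close>

definition cube :: "nat \<Rightarrow> (nat \<Rightarrow> real) set" where
  "cube n = {x. (\<forall>i<n. 0 \<le> x i \<and> x i \<le> 1) \<and> (\<forall>i\<ge>n. x i = 0)}"

definition cube_top :: "nat \<Rightarrow> (nat \<Rightarrow> real) topology" where
  "cube_top n = subtopology (powertop_real UNIV) (cube n)"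

definition sing_cubes :: "nat \<Rightarrow> 'a topology \<Rightarrow> ((nat \<Rightarrow> real) \<Rightarrow> 'a) set" where
  "sing_cubes n X = {T. continuous_map (cube_top n) X T \<and> T \<in> extensional (cube n)}"

text \<open>Chains K_n(X): finitely supported coefficient functions on S_n(X) (free R-module).\<close>

type_synonym ('a,'r) chain = "((nat \<Rightarrow> real) \<Rightarrow> 'a) \<Rightarrow> 'r"

definition is_chain :: "'a topology \<Rightarrow> nat \<Rightarrow> ('a,'r::comm_ring_1) chain \<Rightarrow> bool" where
  "is_chain X n c \<longleftrightarrow> finite {T. c T \<noteq> 0} \<and> (\<forall>T. c T \<noteq> 0 \<longrightarrow> T \<in> sing_cubes n X)"

definition basis_chain :: "((nat \<Rightarrow> real) \<Rightarrow> 'a) \<Rightarrow> ('a,'r::comm_ring_1) chain" where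
  "basis_chain T = (\<lambda>S. if S = T then 1 else 0)"

definition lin_ext :: "(((nat \<Rightarrow> real) \<Rightarrow> 'a) \<Rightarrow> ('a,'r::comm_ring_1) chain)
     \<Rightarrow> ('a,'r) chain \<Rightarrow> ('a,'r) chain" where
  "lin_ext g c = (\<lambda>S. \<Sum>T\<in>{T. c T \<noteq> 0}. c T * g T S)"

definition smult_chain :: "'r::comm_ring_1 \<Rightarrow> ('a,'r) chain \<Rightarrow> ('a,'r) chain" where
  "smult_chain r c = (\<lambda>S. r * c S)"

text \<open>Face <T>_{n,i,j} (j = 1..n): insert the value i at coordinate position j.\<close>

definition face :: "nat \<Rightarrow> real \<Rightarrow> nat \<Rightarrow> ((nat \<Rightarrow> real) \<Rightarrow> 'a) \<Rightarrow> ((nat \<Rightarrow> real) \<Rightarrow> 'a)" where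
  "face n i j T = restrict (\<lambda>x. T (\<lambda>k. if k < j - 1 then x k else if k = j - 1 then i else x (k - 1)))
                      (cube (n - 1))"

definition bd_cube :: "'r::comm_ring_1 \<Rightarrow> 'r \<Rightarrow> nat \<Rightarrow> ((nat \<Rightarrow> real) \<Rightarrow> 'a) \<Rightarrow> ('a,'r) chain" where
  "bd_cube a b n T = (\<lambda>S. \<Sum>j\<in>{1..n}. (-1) ^ (j + 1) *
      (a * basis_chain (face n 0 j T) S + b * basis_chain (face n 1 j T) S))"

definition bd :: "'r::comm_ring_1 \<Rightarrow> 'r \<Rightarrow> nat \<Rightarrow> ('a,'r) chain \<Rightarrow> ('a,'r) chain" where
  "bd a b n c = (if n = 0 then (\<lambda>_. 0) else lin_ext (bd_cube a b n) c)"

definition hclass :: "'a topology \<Rightarrow> 'r::comm_ring_1 \<Rightarrow> 'r \<Rightarrow> nat \<Rightarrow> ('a,'r) chain \<Rightarrow> ('a,'r) chain set" where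
  "hclass X a b n u = {(\<lambda>S. u S + w S) | w. \<exists>c. is_chain X (Suc n) c \<and> w = bd a b (Suc n) c}"

definition hmap :: "nat \<Rightarrow> (nat \<Rightarrow> int) \<Rightarrow> (nat \<Rightarrow> int) \<Rightarrow> (nat \<Rightarrow> real) \<Rightarrow> (nat \<Rightarrow> real)" where
  "hmap n e v x = (\<lambda>i. if i < n then (real_of_int (e i) + real_of_int (v i) * x i) / 3 else 0)"

definition Vset :: "nat \<Rightarrow> (nat \<Rightarrow> int) \<Rightarrow> (nat \<Rightarrow> int) set" where
  "Vset n e = {v \<in> {..<n} \<rightarrow>\<^sub>E {-1, 1}. \<forall>i<n. e i = 0 \<longrightarrow> v i = 1}"

definition SD_cube :: "nat \<Rightarrow> ((nat \<Rightarrow> real) \<Rightarrow> 'a) \<Rightarrow> ('a,'r::comm_ring_1) chain" where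
  "SD_cube n T = (if n = 0 then (\<lambda>S. - basis_chain T S)
     else (\<lambda>S. \<Sum>e\<in>{..<n} \<rightarrow>\<^sub>E {0, 2}. \<Sum>v\<in>Vset n e.
            (- (\<Prod>i<n. of_int (v i))) * basis_chain (restrict (T \<circ> hmap n e v) (cube n)) S))"

definition SD :: "nat \<Rightarrow> ('a,'r::comm_ring_1) chain \<Rightarrow> ('a,'r) chain" where
  "SD n c = lin_ext (SD_cube n) c"

end

theory Submission
  imports Defs "HOL-Library.Function_Algebras"
begin

text \<open>
  On the interval, \<open>SD\<^sub>1 T = - T \<circ> S\<close> for the 1-chain \<open>S\<close> of the three affine thirds
  \<open>x/3, (2 - x)/3, (2 + x)/3\<close> with signs \<open>+, -, +\<close>. The identity path \<open>I\<close> and \<open>S\<close> have the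
  same weighted boundary \<open>a [0] + b [1]\<close>, and two explicit bilinear squares have boundaries
  \<open>a (I - S)\<close> and \<open>b (I - S)\<close>. On \<open>n\<close>-cubes \<open>SD\<^sub>n T\<close> is \<open>- T\<close> composed with the \<open>n\<close>-fold
  product of \<open>S\<close>, and for such a square \<open>K\<close> the telescoping prism
  \<open>\<Sum>\<^sub>i \<plusminus> S\<^sup>i \<times> K \<times> I\<^sup>n\<^sup>-\<^sup>1\<^sup>-\<^sup>i\<close> is a chain homotopy, so that \<open>\<lambda> (v + SD v)\<close> is a
  boundary for every cycle \<open>v\<close> and \<open>\<lambda> \<in> {a, b}\<close>. The degenerate cube \<open>T(x\<^sub>2, \<dots>, x\<^sub>n\<^sub>+\<^sub>1)\<close>
  has \<open>T\<close> as both of its faces in the first direction, so \<open>(a + b) v\<close> is a boundary too.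
  Hence \<open>a SD v\<close> is homologous to \<open>b v\<close> and \<open>b SD v\<close> to \<open>a v\<close>; since \<open>SD\<close> is a chain map,
  \<open>SD v\<close> is again a cycle and induction on \<open>k\<close> finishes the proof.

  All maps of cubes that occur are products of constant, affine and bilinear factors. They are
  handled symbolically as words of factors; a formal linear combination of words is a list of
  coefficient-word pairs, and two of them are identified when their sums against every test
  function agree.
\<close>

section \<open>Finitely supported chains and linear extension\<close>

definition finite_support :: "('a,'r::comm_ring_1) chain \<Rightarrow> bool" where
  "finite_support c \<longleftrightarrow> finite {T. c T \<noteq> 0}"

lemma finite_support_add: "finite_support c \<Longrightarrow> finite_support d \<Longrightarrow> finite_support (c + d)"
  unfolding finite_support_def
  by (rule finite_subset[of _ "{T. c T \<noteq> 0} \<union> {T. d T \<noteq> 0}"]) auto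

lemma finite_support_smult: "finite_support c \<Longrightarrow> finite_support (smult_chain r c)"
  unfolding finite_support_def smult_chain_def by (rule finite_subset[of _ "{T. c T \<noteq> 0}"]) auto

lemma finite_support_basis_chain: "finite_support (basis_chain T)"
  unfolding finite_support_def basis_chain_def by (rule finite_subset[of _ "{T}"]) auto

lemma finite_support_zero: "finite_support 0"
  by (simp add: finite_support_def)

lemma finite_support_sum:
  "finite I \<Longrightarrow> (\<And>i. i \<in> I \<Longrightarrow> finite_support (f i)) \<Longrightarrow> finite_support (\<lambda>S. \<Sum>i\<in>I. f i S)"
proof (induction I rule: finite_induct)
  case empty
  then show ?case by (simp add: finite_support_def)
next
  case (insert x F)
  then have "finite_support (f x + (\<lambda>S. \<Sum>i\<in>F. f i S))"
    by (intro finite_support_add) auto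
  with insert show ?case by (simp add: plus_fun_def)
qed

lemma is_chain_finite_support: "is_chain X n c \<Longrightarrow> finite_support c"
  by (simp add: is_chain_def finite_support_def)

lemma is_chain_extensional: "is_chain X n c \<Longrightarrow> c T \<noteq> 0 \<Longrightarrow> T \<in> extensional (cube n)"
  by (simp add: is_chain_def sing_cubes_def)

lemma lin_ext_eq_sum_superset:
  assumes "finite A" "{T. c T \<noteq> 0} \<subseteq> A"
  shows "lin_ext g c = (\<lambda>S. \<Sum>T\<in>A. c T * g T S)"
  unfolding lin_ext_def using assms by (intro ext sum.mono_neutral_left) auto

lemma lin_ext_add:
  assumes "finite_support c" "finite_support d"
  shows "lin_ext g (c + d) = lin_ext g c + lin_ext g d"
proof -
  let ?A = "{T. c T \<noteq> 0} \<union> {T. d T \<noteq> 0}"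
  have "finite ?A" using assms by (simp add: finite_support_def)
  then show ?thesis
    by (subst (1 2 3) lin_ext_eq_sum_superset[of ?A]) (auto simp: sum.distrib distrib_right)
qed

lemma lin_ext_smult:
  assumes "finite_support c"
  shows "lin_ext g (smult_chain r c) = smult_chain r (lin_ext g c)"
proof -
  have "finite {T. c T \<noteq> 0}" using assms by (simp add: finite_support_def)
  then show ?thesis
    by (subst (1 2) lin_ext_eq_sum_superset[of "{T. c T \<noteq> 0}"])
       (auto simp: smult_chain_def sum_distrib_left mult.assoc)
qed

lemma lin_ext_zero [simp]: "lin_ext g 0 = 0"
  by (simp add: lin_ext_def zero_fun_def)

lemma lin_ext_basis_chain [simp]: "lin_ext g (basis_chain T) = g T"
  by (subst lin_ext_eq_sum_superset[of "{T}"]) (auto simp: basis_chain_def)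

lemma lin_ext_basis_chain_id: "finite_support c \<Longrightarrow> lin_ext basis_chain c = c"
  unfolding lin_ext_def basis_chain_def finite_support_def
  by (auto intro!: ext simp: if_distrib cong: if_cong)

lemma lin_ext_fun_add: "lin_ext (\<lambda>T. g T + h T) c = lin_ext g c + lin_ext h c"
  unfolding lin_ext_def by (auto intro!: ext simp: sum.distrib distrib_left)

lemma lin_ext_fun_smult: "lin_ext (\<lambda>T. smult_chain r (g T)) c = smult_chain r (lin_ext g c)"
  unfolding lin_ext_def smult_chain_def by (auto intro!: ext simp: sum_distrib_left mult.left_commute)

lemma lin_ext_fun_zero [simp]: "lin_ext (\<lambda>T. 0) c = 0"
  by (simp add: lin_ext_def zero_fun_def)

lemma lin_ext_cong: "(\<And>T. c T \<noteq> 0 \<Longrightarrow> g T = h T) \<Longrightarrow> lin_ext g c = lin_ext h c"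
  unfolding lin_ext_def by (auto intro!: ext sum.cong)

lemma lin_ext_sum:
  "finite I \<Longrightarrow> (\<And>i. i \<in> I \<Longrightarrow> finite_support (f i)) \<Longrightarrow>
    lin_ext h (\<lambda>S. \<Sum>i\<in>I. f i S) = (\<lambda>S. \<Sum>i\<in>I. lin_ext h (f i) S)"
proof (induction I rule: finite_induct)
  case empty
  then show ?case by (simp add: lin_ext_def)
next
  case (insert x F)
  have "(\<lambda>S. \<Sum>i\<in>insert x F. f i S) = f x + (\<lambda>S. \<Sum>i\<in>F. f i S)"
    using insert by (auto simp: plus_fun_def)
  moreover have "finite_support (\<lambda>S. \<Sum>i\<in>F. f i S)"
    using insert by (intro finite_support_sum) auto
  ultimately show ?case
    using insert by (simp add: lin_ext_add)
qed

lemma lin_ext_lin_ext: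
  assumes "finite_support c" "\<And>T. c T \<noteq> 0 \<Longrightarrow> finite_support (g T)"
  shows "lin_ext h (lin_ext g c) = lin_ext (\<lambda>T. lin_ext h (g T)) c"
proof -
  have "finite {T. c T \<noteq> 0}" using assms by (simp add: finite_support_def)
  then have "lin_ext h (lin_ext g c) = (\<lambda>S. \<Sum>T\<in>{T. c T \<noteq> 0}. lin_ext h (smult_chain (c T) (g T)) S)"
    unfolding lin_ext_def[of g c]
    by (subst lin_ext_sum) (auto simp: assms finite_support_smult[unfolded smult_chain_def] smult_chain_def)
  also have "\<dots> = lin_ext (\<lambda>T. lin_ext h (g T)) c"
    unfolding lin_ext_def[of _ c] using assms
    by (intro ext sum.cong refl) (simp add: lin_ext_smult, simp add: smult_chain_def)
  finally show ?thesis .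
qed

lemma is_chain_zero: "is_chain X n 0"
  by (simp add: is_chain_def)

lemma is_chain_add: "is_chain X n c \<Longrightarrow> is_chain X n d \<Longrightarrow> is_chain X n (c + d)"
  using finite_support_add[of c d] by (auto simp: is_chain_def finite_support_def) (metis add_0)

lemma is_chain_smult: "is_chain X n c \<Longrightarrow> is_chain X n (smult_chain r c)"
  using finite_support_smult[of c r] by (auto simp: is_chain_def finite_support_def smult_chain_def)
    (metis mult_zero_right)

lemma is_chain_basis_chain: "T \<in> sing_cubes n X \<Longrightarrow> is_chain X n (basis_chain T)"
  using finite_support_basis_chain[of T] by (auto simp: is_chain_def finite_support_def basis_chain_def)

lemma is_chain_sum:
  "finite I \<Longrightarrow> (\<And>i. i \<in> I \<Longrightarrow> is_chain X n (f i)) \<Longrightarrow> is_chain X n (\<lambda>S. \<Sum>i\<in>I. f i S)"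
proof (induction I rule: finite_induct)
  case empty
  then show ?case by (simp add: is_chain_def)
next
  case (insert x F)
  then have "is_chain X n (f x + (\<lambda>S. \<Sum>i\<in>F. f i S))"
    by (intro is_chain_add) auto
  with insert show ?case by (simp add: plus_fun_def)
qed

lemma is_chain_lin_ext:
  assumes "is_chain X n c" "\<And>T. T \<in> sing_cubes n X \<Longrightarrow> is_chain X m (g T)"
  shows "is_chain X m (lin_ext g c)"
  unfolding lin_ext_def
proof (rule is_chain_sum)
  show "finite {T. c T \<noteq> 0}" using assms(1) by (simp add: is_chain_def)
  fix T assume "T \<in> {T. c T \<noteq> 0}"
  then have "is_chain X m (g T)" using assms by (auto simp: is_chain_def)
  then show "is_chain X m (\<lambda>S. c T * g T S)"
    using is_chain_smult[of X m "g T" "c T"] by (simp add: smult_chain_def)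
qed

section \<open>The weighted boundary and homology classes\<close>

lemma bd_cube_0: "bd_cube a b 0 = (\<lambda>T. 0)"
  by (simp add: bd_cube_def fun_eq_iff)

lemma bd_cube_eq_sum:
  "bd_cube a b n T = (\<lambda>S. \<Sum>j\<in>{1..n}. smult_chain ((-1)^(j+1))
     (smult_chain a (basis_chain (face n 0 j T)) + smult_chain b (basis_chain (face n 1 j T))) S)"
  by (simp add: bd_cube_def smult_chain_def)

lemma bd_eq_lin_ext: "n \<noteq> 0 \<Longrightarrow> bd a b n c = lin_ext (bd_cube a b n) c"
  by (simp add: bd_def)

lemma finite_support_bd_cube: "finite_support (bd_cube a b n T)"
  unfolding bd_cube_eq_sum
  by (intro finite_support_sum finite_support_smult finite_support_add finite_support_basis_chain) simp

lemma lin_ext_bd_cube: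
  "lin_ext h (bd_cube a b n T) =
     (\<lambda>S. \<Sum>j\<in>{1..n}. (-1)^(j+1) * (a * h (face n 0 j T) S + b * h (face n 1 j T) S))"
  unfolding bd_cube_eq_sum
  by (subst lin_ext_sum)
     (simp_all add: finite_support_add finite_support_smult finite_support_basis_chain
       lin_ext_add lin_ext_smult, simp add: smult_chain_def)

lemma bd_add:
  "finite_support c \<Longrightarrow> finite_support d \<Longrightarrow> bd a b n (c + d) = bd a b n c + bd a b n d"
  by (cases "n = 0") (simp_all add: bd_def lin_ext_add zero_fun_def)

lemma bd_smult:
  assumes "finite_support c"
  shows "bd a b n (smult_chain r c) = smult_chain r (bd a b n c)"
proof (cases "n = 0")
  case True
  then show ?thesis by (simp add: bd_def smult_chain_def)
next
  case False
  then show ?thesis using assms by (simp add: bd_def lin_ext_smult)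
qed

lemma lin_ext_bd_cube_cycle:
  assumes "bd a b n v = 0"
  shows "lin_ext (bd_cube a b n) v = 0"
  using assms by (cases "n = 0") (simp_all add: bd_def bd_cube_0)

lemma bd_lin_ext_of_cycle:
  assumes "finite_support v" "bd a b n v = 0" "m \<noteq> 0"
    and "\<And>T. v T \<noteq> 0 \<Longrightarrow> finite_support (H T)"
    and "\<And>T. v T \<noteq> 0 \<Longrightarrow> bd a b m (H T) = A T + lin_ext H' (bd_cube a b n T)"
  shows "bd a b m (lin_ext H v) = lin_ext A v"
proof -
  have "bd a b m (lin_ext H v) = lin_ext (\<lambda>T. lin_ext (bd_cube a b m) (H T)) v"
    using assms by (simp add: bd_eq_lin_ext lin_ext_lin_ext)
  also have "\<dots> = lin_ext (\<lambda>T. A T + lin_ext H' (bd_cube a b n T)) v"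
    using assms by (intro lin_ext_cong) (simp add: bd_eq_lin_ext)
  also have "\<dots> = lin_ext A v + lin_ext H' (lin_ext (bd_cube a b n) v)"
    using assms by (simp add: lin_ext_fun_add lin_ext_lin_ext finite_support_bd_cube)
  finally show ?thesis
    using assms by (simp add: lin_ext_bd_cube_cycle)
qed

definition boundaries :: "'a topology \<Rightarrow> 'r::comm_ring_1 \<Rightarrow> 'r \<Rightarrow> nat \<Rightarrow> ('a,'r) chain set" where
  "boundaries X a b n = {bd a b (Suc n) c | c. is_chain X (Suc n) c}"

lemma bd_in_boundaries: "is_chain X (Suc n) c \<Longrightarrow> bd a b (Suc n) c \<in> boundaries X a b n"
  by (auto simp: boundaries_def)

lemma zero_in_boundaries: "0 \<in> boundaries X a b n"
  using bd_in_boundaries[OF is_chain_zero] by (simp add: bd_def)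

lemma add_in_boundaries:
  assumes "x \<in> boundaries X a b n" "y \<in> boundaries X a b n"
  shows "x + y \<in> boundaries X a b n"
proof -
  obtain c d where "is_chain X (Suc n) c" "x = bd a b (Suc n) c"
    and "is_chain X (Suc n) d" "y = bd a b (Suc n) d"
    using assms by (auto simp: boundaries_def)
  then show ?thesis
    by (metis bd_add bd_in_boundaries is_chain_add is_chain_finite_support)
qed

lemma smult_in_boundaries:
  assumes "x \<in> boundaries X a b n"
  shows "smult_chain r x \<in> boundaries X a b n"
proof -
  obtain c where "is_chain X (Suc n) c" "x = bd a b (Suc n) c"
    using assms by (auto simp: boundaries_def)
  then show ?thesis
    by (metis bd_smult bd_in_boundaries is_chain_smult is_chain_finite_support)
qed

lemma diff_in_boundaries:
  assumes "x \<in> boundaries X a b n" "y \<in> boundaries X a b n"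
  shows "x - y \<in> boundaries X a b n"
proof -
  have "x - y = x + smult_chain (-1) y" by (simp add: fun_eq_iff smult_chain_def)
  then show ?thesis by (simp only: add_in_boundaries smult_in_boundaries assms)
qed

lemma hclass_eq_boundaries: "hclass X a b n u = (\<lambda>w. u + w) ` boundaries X a b n"
  by (auto simp: hclass_def boundaries_def plus_fun_def)

lemma hclass_eq:
  assumes "x - y \<in> boundaries X a b n"
  shows "hclass X a b n x = hclass X a b n y"
proof -
  have incl: "hclass X a b n x \<subseteq> hclass X a b n y" if "x - y \<in> boundaries X a b n" for x y
  proof
    fix z assume "z \<in> hclass X a b n x"
    then obtain w where w: "w \<in> boundaries X a b n" "z = x + w"
      by (auto simp: hclass_eq_boundaries)
    then have "z = y + ((x - y) + w)" by simp
    moreover have "(x - y) + w \<in> boundaries X a b n"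
      using that w by (simp add: add_in_boundaries)
    ultimately show "z \<in> hclass X a b n y"
      unfolding hclass_eq_boundaries by blast
  qed
  have "y - x \<in> boundaries X a b n"
    using diff_in_boundaries[OF zero_in_boundaries assms] by simp
  with assms show ?thesis by (intro subset_antisym incl)
qed

section \<open>Maps between cubes and degenerate cubes\<close>

definition insert_coord :: "nat \<Rightarrow> real \<Rightarrow> (nat \<Rightarrow> real) \<Rightarrow> (nat \<Rightarrow> real)" where
  "insert_coord p r x = (\<lambda>k. if k < p then x k else if k = p then r else x (k - 1))"

lemma face_eq_insert_coord: "face n i j T = restrict (T \<circ> insert_coord (j - 1) i) (cube (n - 1))"
  unfolding face_def insert_coord_def o_def by (rule refl)

lemma insert_coord_in_cube:
  "p \<le> m \<Longrightarrow> 0 \<le> r \<Longrightarrow> r \<le> 1 \<Longrightarrow> x \<in> cube m \<Longrightarrow> insert_coord p r x \<in> cube (Suc m)"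
  by (auto simp: cube_def insert_coord_def)

lemma continuous_map_coord: "continuous_map (powertop_real UNIV) euclideanreal (\<lambda>x. x i)"
  by (rule continuous_map_product_projection) simp

lemma restrict_comp_in_sing_cubes:
  assumes "continuous_map (powertop_real UNIV) (powertop_real UNIV) g"
    and "\<And>x. x \<in> cube m \<Longrightarrow> g x \<in> cube n" and "T \<in> sing_cubes n X"
  shows "restrict (T \<circ> g) (cube m) \<in> sing_cubes m X"
proof -
  have "continuous_map (cube_top m) (cube_top n) g"
    unfolding cube_top_def
    by (rule continuous_map_into_subtopology) (auto intro: continuous_map_from_subtopology assms)
  moreover have "continuous_map (cube_top n) X T"
    using assms(3) by (simp add: sing_cubes_def)
  ultimately have "continuous_map (cube_top m) X (T \<circ> g)"
    by (rule continuous_map_compose)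
  then have "continuous_map (cube_top m) X (restrict (T \<circ> g) (cube m))"
    by (rule continuous_map_eq) (simp add: cube_top_def)
  then show ?thesis by (simp add: sing_cubes_def)
qed

definition drop_first_coord :: "nat \<Rightarrow> (nat \<Rightarrow> real) \<Rightarrow> (nat \<Rightarrow> real)" where
  "drop_first_coord n x = (\<lambda>k. if k < n then x (Suc k) else 0)"

definition degenerate_cube :: "nat \<Rightarrow> ((nat \<Rightarrow> real) \<Rightarrow> 'a) \<Rightarrow> ((nat \<Rightarrow> real) \<Rightarrow> 'a)" where
  "degenerate_cube n T = restrict (T \<circ> drop_first_coord n) (cube (Suc n))"

lemma degenerate_cube_in_sing_cubes:
  assumes "T \<in> sing_cubes n X"
  shows "degenerate_cube n T \<in> sing_cubes (Suc n) X"
  unfolding degenerate_cube_def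
proof (rule restrict_comp_in_sing_cubes[OF _ _ assms])
  show "continuous_map (powertop_real UNIV) (powertop_real UNIV) (drop_first_coord n)"
    unfolding continuous_map_componentwise_UNIV drop_first_coord_def
    by (simp add: continuous_map_coord)
qed (auto simp: drop_first_coord_def cube_def)

lemma face_degenerate_cube_1:
  assumes "T \<in> extensional (cube n)" "i = 0 \<or> i = 1"
  shows "face (Suc n) i 1 (degenerate_cube n T) = T"
proof
  fix x
  show "face (Suc n) i 1 (degenerate_cube n T) x = T x"
  proof (cases "x \<in> cube n")
    case True
    then have "insert_coord 0 i x \<in> cube (Suc n)" "drop_first_coord n (insert_coord 0 i x) = x"
      using assms(2) by (auto simp: insert_coord_in_cube drop_first_coord_def insert_coord_def cube_def)
    with True show ?thesis
      by (simp add: face_eq_insert_coord degenerate_cube_def)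
  next
    case False
    with assms(1) show ?thesis by (simp add: face_eq_insert_coord extensional_def)
  qed
qed

lemma face_degenerate_cube_Suc:
  assumes "1 \<le> j" "j \<le> n" "i = 0 \<or> i = 1"
  shows "face (Suc n) i (Suc j) (degenerate_cube n T) = degenerate_cube (n - 1) (face n i j T)"
proof
  fix x
  have n: "Suc (n - Suc 0) = n" using assms by simp
  show "face (Suc n) i (Suc j) (degenerate_cube n T) x = degenerate_cube (n - 1) (face n i j T) x"
  proof (cases "x \<in> cube n")
    case True
    have "insert_coord j i x \<in> cube (Suc n)"
      using True assms by (intro insert_coord_in_cube) auto
    moreover have "drop_first_coord (n - 1) x \<in> cube (n - 1)"
      using True by (auto simp: drop_first_coord_def cube_def)
    moreover have "drop_first_coord n (insert_coord j i x)
        = insert_coord (j - 1) i (drop_first_coord (n - 1) x)"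
      using assms by (auto simp: drop_first_coord_def insert_coord_def fun_eq_iff)
    ultimately show ?thesis
      using True by (simp add: face_eq_insert_coord degenerate_cube_def n)
  next
    case False
    then show ?thesis by (simp add: face_eq_insert_coord degenerate_cube_def n)
  qed
qed

lemma bd_cube_degenerate_cube:
  assumes "T \<in> extensional (cube n)"
  shows "bd_cube a b (Suc n) (degenerate_cube n T) = smult_chain (a + b) (basis_chain T) +
     lin_ext (\<lambda>T'. smult_chain (-1) (basis_chain (degenerate_cube (n - 1) T'))) (bd_cube a b n T)"
proof
  fix S
  let ?F = "\<lambda>j. (-1)^(j+1) * (a * basis_chain (face (Suc n) 0 j (degenerate_cube n T)) S
                           + b * basis_chain (face (Suc n) 1 j (degenerate_cube n T)) S)"
  have "{1..Suc n} = insert 1 {Suc 1..Suc n}" by auto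
  then have "bd_cube a b (Suc n) (degenerate_cube n T) S = ?F 1 + (\<Sum>j\<in>{Suc 1..Suc n}. ?F j)"
    by (simp add: bd_cube_def del: One_nat_def)
  also have "(\<Sum>j\<in>{Suc 1..Suc n}. ?F j) = (\<Sum>j\<in>{1..n}. ?F (Suc j))"
    by (rule sum.shift_bounds_cl_Suc_ivl)
  also have "\<dots> = (\<Sum>j\<in>{1..n}. (-1)^(j+1) *
      (a * - basis_chain (degenerate_cube (n - 1) (face n 0 j T)) S
     + b * - basis_chain (degenerate_cube (n - 1) (face n 1 j T)) S))"
    by (intro sum.cong refl) (simp add: face_degenerate_cube_Suc algebra_simps)
  also have "?F 1 = (a + b) * basis_chain T S"
    using assms by (simp add: face_degenerate_cube_1 algebra_simps del: One_nat_def)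
  finally show "bd_cube a b (Suc n) (degenerate_cube n T) S = (smult_chain (a + b) (basis_chain T) +
     lin_ext (\<lambda>T'. smult_chain (-1) (basis_chain (degenerate_cube (n - 1) T'))) (bd_cube a b n T)) S"
    by (simp add: lin_ext_bd_cube smult_chain_def)
qed

lemma smult_add_weights_cycle_in_boundaries:
  assumes v: "is_chain X n v" "bd a b n v = 0"
  shows "smult_chain (a + b) v \<in> boundaries X a b n"
proof -
  let ?H = "\<lambda>T. basis_chain (degenerate_cube n T)"
  have "is_chain X (Suc n) (lin_ext ?H v)"
    using v by (intro is_chain_lin_ext is_chain_basis_chain degenerate_cube_in_sing_cubes)
  moreover have "bd a b (Suc n) (lin_ext ?H v) = lin_ext (\<lambda>T. smult_chain (a + b) (basis_chain T)) v"
  proof (rule bd_lin_ext_of_cycle)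
    fix T assume "v T \<noteq> 0"
    then have "T \<in> extensional (cube n)"
      by (rule is_chain_extensional[OF v(1)])
    then show "bd a b (Suc n) (?H T) = smult_chain (a + b) (basis_chain T) +
        lin_ext (\<lambda>T'. smult_chain (-1) (basis_chain (degenerate_cube (n - 1) T'))) (bd_cube a b n T)"
      by (simp add: bd_eq_lin_ext bd_cube_degenerate_cube plus_fun_def)
  qed (use v in \<open>simp_all add: is_chain_finite_support finite_support_basis_chain\<close>)
  moreover have "lin_ext (\<lambda>T. smult_chain (a + b) (basis_chain T)) v = smult_chain (a + b) v"
    using v by (simp add: lin_ext_fun_smult lin_ext_basis_chain_id is_chain_finite_support)
  ultimately show ?thesis
    by (metis bd_in_boundaries)
qed

section \<open>Formal linear combinations of words of factors\<close>

type_synonym ('r, 'w) comb = "('r \<times> 'w) list"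

definition comb_sum :: "('w \<Rightarrow> 'r::comm_ring_1) \<Rightarrow> ('r, 'w) comb \<Rightarrow> 'r" where
  "comb_sum G L = sum_list (map (\<lambda>(c, w). c * G w) L)"

lemma comb_sum_Nil [simp]: "comb_sum G [] = 0"
  and comb_sum_Cons [simp]: "comb_sum G ((c, w) # L) = c * G w + comb_sum G L"
  and comb_sum_append [simp]: "comb_sum G (L1 @ L2) = comb_sum G L1 + comb_sum G L2"
  by (auto simp: comb_sum_def)

lemma comb_sum_concat: "comb_sum G (concat Ls) = sum_list (map (comb_sum G) Ls)"
  by (induction Ls) auto

lemma comb_sum_add_fun: "comb_sum (\<lambda>w. G w + H w) L = comb_sum G L + comb_sum H L"
  by (induction L) (auto simp: algebra_simps)

lemma comb_sum_diff_fun: "comb_sum (\<lambda>w. G w - H w) L = comb_sum G L - comb_sum H L"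
  by (induction L) (auto simp: algebra_simps)

lemma comb_sum_cmult_fun: "comb_sum (\<lambda>w. r * G w) L = r * comb_sum G L"
  by (induction L) (auto simp: algebra_simps)

lemma comb_sum_zero_fun: "comb_sum (\<lambda>w. 0) L = 0"
  by (induction L) auto

lemma comb_sum_sum_fun: "comb_sum (\<lambda>w. \<Sum>i\<in>I. F i w) L = (\<Sum>i\<in>I. comb_sum (F i) L)"
  by (induction L) (auto simp: sum.distrib sum_distrib_left)

lemma comb_sum_swap:
  "comb_sum (\<lambda>x. comb_sum (\<lambda>y. H x y) B) A = comb_sum (\<lambda>y. comb_sum (\<lambda>x. H x y) A) B"
  by (induction A) (auto simp: comb_sum_add_fun comb_sum_cmult_fun comb_sum_zero_fun)

lemma comb_sum_cong: "(\<And>c w. (c, w) \<in> set L \<Longrightarrow> G w = H w) \<Longrightarrow> comb_sum G L = comb_sum H L"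
  unfolding comb_sum_def by (intro arg_cong[where f = sum_list] map_cong) auto

definition comb_smult :: "'r::comm_ring_1 \<Rightarrow> ('r, 'w) comb \<Rightarrow> ('r, 'w) comb" where
  "comb_smult r L = map (\<lambda>(c, w). (r * c, w)) L"

lemma comb_sum_comb_smult [simp]: "comb_sum G (comb_smult r L) = r * comb_sum G L"
  by (induction L) (auto simp: comb_smult_def algebra_simps)

lemma set_comb_smult: "(c, w) \<in> set (comb_smult r L) \<Longrightarrow> \<exists>d. (d, w) \<in> set L"
  by (auto simp: comb_smult_def)

definition comb_bind :: "('w \<Rightarrow> ('r::comm_ring_1, 'v) comb) \<Rightarrow> ('r, 'w) comb \<Rightarrow> ('r, 'v) comb" where
  "comb_bind F L = concat (map (\<lambda>(c, w). comb_smult c (F w)) L)"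

lemma comb_sum_comb_bind [simp]: "comb_sum G (comb_bind F L) = comb_sum (\<lambda>w. comb_sum G (F w)) L"
  by (induction L) (auto simp: comb_bind_def)

definition comb_tensor :: "('r::comm_ring_1, 'a) comb \<Rightarrow> ('r, 'a list) comb \<Rightarrow> ('r, 'a list) comb" where
  "comb_tensor X Y = concat (map (\<lambda>(c, f). map (\<lambda>(d, u). (c * d, f # u)) Y) X)"

lemma comb_sum_comb_tensor [simp]:
  "comb_sum G (comb_tensor X Y) = comb_sum (\<lambda>f. comb_sum (\<lambda>u. G (f # u)) Y) X"
proof (induction X)
  case (Cons x X)
  obtain c f where "x = (c, f)" by force
  moreover have "comb_sum G (map (\<lambda>(d, u). (c * d, f # u)) Y) = c * comb_sum (\<lambda>u. G (f # u)) Y"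
    by (induction Y) (auto simp: algebra_simps)
  ultimately show ?case using Cons by (simp add: comb_tensor_def)
qed (simp add: comb_tensor_def)

lemma comb_tensor_Nil [simp]: "comb_tensor X [] = []"
  by (simp add: comb_tensor_def)

lemma set_comb_tensor:
  "(e, w) \<in> set (comb_tensor X Y) \<Longrightarrow> \<exists>c f d u. (c, f) \<in> set X \<and> (d, u) \<in> set Y \<and> w = f # u"
  by (auto simp: comb_tensor_def)

primrec comb_power :: "('r::comm_ring_1, 'a) comb \<Rightarrow> nat \<Rightarrow> ('r, 'a list) comb" where
  "comb_power X 0 = [(1, [])]"
| "comb_power X (Suc n) = comb_tensor X (comb_power X n)"

lemma set_comb_power:
  "(c, w) \<in> set (comb_power X n) \<Longrightarrow> length w = n \<and> (\<forall>f \<in> set w. \<exists>d. (d, f) \<in> set X)"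
  by (induction n arbitrary: c w) (auto dest!: set_comb_tensor)

text \<open>A word \<open>[f\<^sub>1, \<dots>, f\<^sub>k]\<close> of factors stands for the product map from the cube of dimension
  \<open>dim f\<^sub>1 + \<dots> + dim f\<^sub>k\<close> to the \<open>k\<close>-cube, the factor \<open>f\<^sub>i\<close> reading its own block of
  consecutive coordinates. \<open>Affine \<alpha> \<beta>\<close> is \<open>t \<mapsto> \<alpha> + \<beta> t\<close> and \<open>Bilinear\<close> interpolates its four
  corner values \<open>c\<^sub>0\<^sub>0, c\<^sub>1\<^sub>0, c\<^sub>0\<^sub>1, c\<^sub>1\<^sub>1\<close>.\<close>

datatype factor = Const real | Affine real real | Bilinear real real real real

fun factor_dim :: "factor \<Rightarrow> nat" where
  "factor_dim (Const _) = 0"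
| "factor_dim (Affine _ _) = 1"
| "factor_dim (Bilinear _ _ _ _) = 2"

definition word_dim :: "factor list \<Rightarrow> nat" where
  "word_dim w = sum_list (map factor_dim w)"

lemma word_dim_Nil [simp]: "word_dim [] = 0"
  and word_dim_Cons [simp]: "word_dim (f # w) = factor_dim f + word_dim w"
  by (auto simp: word_dim_def)

fun factor_eval :: "factor \<Rightarrow> (nat \<Rightarrow> real) \<Rightarrow> real" where
  "factor_eval (Const r) x = r"
| "factor_eval (Affine \<alpha> \<beta>) x = \<alpha> + \<beta> * x 0"
| "factor_eval (Bilinear c00 c10 c01 c11) x =
    (1 - x 0) * ((1 - x 1) * c00 + x 1 * c01) + x 0 * ((1 - x 1) * c10 + x 1 * c11)"

fun factor_into_unit :: "factor \<Rightarrow> bool" where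
  "factor_into_unit (Const r) \<longleftrightarrow> 0 \<le> r \<and> r \<le> 1"
| "factor_into_unit (Affine \<alpha> \<beta>) \<longleftrightarrow> 0 \<le> \<alpha> \<and> \<alpha> \<le> 1 \<and> 0 \<le> \<alpha> + \<beta> \<and> \<alpha> + \<beta> \<le> 1"
| "factor_into_unit (Bilinear c00 c10 c01 c11) \<longleftrightarrow>
    0 \<le> c00 \<and> c00 \<le> 1 \<and> 0 \<le> c10 \<and> c10 \<le> 1 \<and> 0 \<le> c01 \<and> c01 \<le> 1 \<and> 0 \<le> c11 \<and> c11 \<le> 1"

definition word_into_unit :: "factor list \<Rightarrow> bool" where
  "word_into_unit w \<longleftrightarrow> (\<forall>f \<in> set w. factor_into_unit f)"

fun factor_face :: "nat \<Rightarrow> real \<Rightarrow> factor \<Rightarrow> factor" where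
  "factor_face p i (Const r) = Const r"
| "factor_face p i (Affine \<alpha> \<beta>) = Const (\<alpha> + \<beta> * i)"
| "factor_face p i (Bilinear c00 c10 c01 c11) = (if p = 0
      then Affine ((1 - i) * c00 + i * c10) ((1 - i) * (c01 - c00) + i * (c11 - c10))
      else Affine ((1 - i) * c00 + i * c01) ((1 - i) * (c10 - c00) + i * (c11 - c01)))"

fun word_face :: "nat \<Rightarrow> real \<Rightarrow> factor list \<Rightarrow> factor list" where
  "word_face p i [] = []"
| "word_face p i (f # w) =
    (if p < factor_dim f then factor_face p i f # w else f # word_face (p - factor_dim f) i w)"

definition factor_bd :: "'r::comm_ring_1 \<Rightarrow> 'r \<Rightarrow> factor \<Rightarrow> ('r, factor) comb" where
  "factor_bd a b f = concat (map (\<lambda>j. [((-1)^(j+1) * a, factor_face (j - 1) 0 f),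
                                      ((-1)^(j+1) * b, factor_face (j - 1) 1 f)])
                                [1..<Suc (factor_dim f)])"

definition word_bd :: "'r::comm_ring_1 \<Rightarrow> 'r \<Rightarrow> factor list \<Rightarrow> ('r, factor list) comb" where
  "word_bd a b w = concat (map (\<lambda>j. [((-1)^(j+1) * a, word_face (j - 1) 0 w),
                                    ((-1)^(j+1) * b, word_face (j - 1) 1 w)])
                              [1..<Suc (word_dim w)])"

definition comb_bd :: "'r::comm_ring_1 \<Rightarrow> 'r \<Rightarrow> ('r, factor list) comb \<Rightarrow> ('r, factor list) comb" where
  "comb_bd a b = comb_bind (word_bd a b)"

fun insert_const :: "nat \<Rightarrow> real \<Rightarrow> factor list \<Rightarrow> factor list" where
  "insert_const 0 r u = Const r # u"
| "insert_const (Suc p) r [] = [Const r]"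
| "insert_const (Suc p) r (f # u) = f # insert_const p r u"

text \<open>The boundary taken on the target side: realised on a cube \<open>T\<close>, it composes the faces of
  \<open>T\<close> with the words.\<close>

definition word_target_bd :: "'r::comm_ring_1 \<Rightarrow> 'r \<Rightarrow> factor list \<Rightarrow> ('r, factor list) comb" where
  "word_target_bd a b u = concat (map (\<lambda>j. [((-1)^j * a, insert_const j 0 u), ((-1)^j * b, insert_const j 1 u)])
                                     [0..<Suc (length u)])"

definition comb_target_bd :: "'r::comm_ring_1 \<Rightarrow> 'r \<Rightarrow> ('r, factor list) comb \<Rightarrow> ('r, factor list) comb" where
  "comb_target_bd a b = comb_bind (word_target_bd a b)"

lemma comb_sum_factor_bd:
  "comb_sum G (factor_bd a b f) =
     (\<Sum>j\<in>{1..factor_dim f}. (-1)^(j+1) * (a * G (factor_face (j - 1) 0 f) + b * G (factor_face (j - 1) 1 f)))"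
  unfolding factor_bd_def comb_sum_concat map_map o_def sum_set_upt_conv_sum_list_nat[symmetric]
    set_upt atLeastLessThanSuc_atLeastAtMost
  by (simp add: algebra_simps)

lemma comb_sum_word_bd:
  "comb_sum G (word_bd a b w) =
     (\<Sum>j\<in>{1..word_dim w}. (-1)^(j+1) * (a * G (word_face (j - 1) 0 w) + b * G (word_face (j - 1) 1 w)))"
  unfolding word_bd_def comb_sum_concat map_map o_def sum_set_upt_conv_sum_list_nat[symmetric]
    set_upt atLeastLessThanSuc_atLeastAtMost
  by (simp add: algebra_simps)

lemma comb_sum_word_target_bd:
  "comb_sum G (word_target_bd a b u) =
     (\<Sum>j<Suc (length u). (-1)^j * (a * G (insert_const j 0 u) + b * G (insert_const j 1 u)))"
  unfolding word_target_bd_def comb_sum_concat map_map o_def sum_set_upt_conv_sum_list_nat[symmetric]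
    set_upt lessThan_atLeast0[symmetric]
  by (simp add: algebra_simps)

lemma comb_sum_word_bd_Cons:
  "comb_sum G (word_bd a b (f # u)) =
     comb_sum (\<lambda>g. G (g # u)) (factor_bd a b f) + (-1)^factor_dim f * comb_sum (\<lambda>w. G (f # w)) (word_bd a b u)"
proof -
  let ?d = "factor_dim f" and ?m = "word_dim u"
  let ?F = "\<lambda>j. (-1)^(j+1) * (a * G (word_face (j - 1) 0 (f # u)) + b * G (word_face (j - 1) 1 (f # u)))"
  have "{1..?d + ?m} = {1..?d} \<union> {?d + 1..?m + ?d}" by auto
  then have "(\<Sum>j\<in>{1..?d + ?m}. ?F j) = (\<Sum>j\<in>{1..?d}. ?F j) + (\<Sum>j\<in>{1 + ?d..?m + ?d}. ?F j)"
    by (simp add: sum.union_disjoint add.commute)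
  also have "(\<Sum>j\<in>{1..?d}. ?F j) = comb_sum (\<lambda>g. G (g # u)) (factor_bd a b f)"
    unfolding comb_sum_factor_bd by (intro sum.cong) auto
  also have "(\<Sum>j\<in>{1 + ?d..?m + ?d}. ?F j) = (\<Sum>j\<in>{1..?m}. ?F (j + ?d))"
    by (rule sum.shift_bounds_cl_nat_ivl)
  also have "\<dots> = (-1)^?d * comb_sum (\<lambda>w. G (f # w)) (word_bd a b u)"
    unfolding comb_sum_word_bd sum_distrib_left
    by (intro sum.cong) (auto simp: power_add algebra_simps)
  finally show ?thesis by (simp add: comb_sum_word_bd)
qed

lemma comb_sum_word_target_bd_Cons:
  "comb_sum G (word_target_bd a b (f # u)) =
     a * G (Const 0 # f # u) + b * G (Const 1 # f # u) - comb_sum (\<lambda>w. G (f # w)) (word_target_bd a b u)"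
  unfolding comb_sum_word_target_bd
  by (subst sum.lessThan_Suc_shift) (simp add: sum_negf[symmetric] sum.distrib[symmetric] algebra_simps)

definition endpoints :: "'r::comm_ring_1 \<Rightarrow> 'r \<Rightarrow> ('r, factor) comb" where
  "endpoints a b = [(a, Const 0), (b, Const 1)]"

lemma comb_bd_tensor:
  assumes "\<And>c f. (c, f) \<in> set X \<Longrightarrow> factor_dim f = d"
  shows "comb_sum G (comb_bd a b (comb_tensor X Y)) =
    comb_sum G (comb_tensor (comb_bind (factor_bd a b) X) Y) + (-1)^d * comb_sum G (comb_tensor X (comb_bd a b Y))"
proof -
  have "comb_sum G (comb_bd a b (comb_tensor X Y)) =
      comb_sum G (comb_tensor (comb_bind (factor_bd a b) X) Y)
    + comb_sum (\<lambda>f. (-1)^factor_dim f * comb_sum (\<lambda>u. G (f # u)) (comb_bd a b Y)) X"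
    by (simp add: comb_bd_def comb_sum_word_bd_Cons comb_sum_add_fun comb_sum_cmult_fun
        comb_sum_swap[of _ _ "factor_bd a b _"])
  also have "comb_sum (\<lambda>f. (-1)^factor_dim f * comb_sum (\<lambda>u. G (f # u)) (comb_bd a b Y)) X
      = (-1)^d * comb_sum G (comb_tensor X (comb_bd a b Y))"
    using assms by (simp add: comb_sum_cmult_fun[symmetric] cong: comb_sum_cong)
  finally show ?thesis .
qed

lemma comb_target_bd_tensor:
  "comb_sum G (comb_target_bd a b (comb_tensor X Y)) =
    comb_sum G (comb_tensor (endpoints a b) (comb_tensor X Y)) - comb_sum G (comb_tensor X (comb_target_bd a b Y))"
  by (simp add: comb_target_bd_def endpoints_def comb_sum_word_target_bd_Cons comb_sum_add_fun
      comb_sum_diff_fun comb_sum_cmult_fun algebra_simps)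

lemma comb_sum_comb_tensor_cong:
  assumes "\<And>G. comb_sum G X = comb_sum G X'" "\<And>G. comb_sum G Y = comb_sum G Y'"
  shows "comb_sum G (comb_tensor X Y) = comb_sum G (comb_tensor X' Y')"
  using assms by simp

lemma comb_sum_factor_bd_Affine [simp]:
  "comb_sum G (factor_bd a b (Affine \<alpha> \<beta>)) = a * G (Const \<alpha>) + b * G (Const (\<alpha> + \<beta>))"
  by (simp add: comb_sum_factor_bd)

lemma comb_sum_factor_bd_Bilinear [simp]:
  "comb_sum G (factor_bd a b (Bilinear c00 c10 c01 c11)) =
     a * G (Affine c00 (c01 - c00)) + b * G (Affine c10 (c11 - c10))
   - a * G (Affine c00 (c10 - c00)) - b * G (Affine c01 (c11 - c01))"
proof -
  have "{1..2::nat} = {1, 2}" by auto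
  then show ?thesis by (simp add: comb_sum_factor_bd algebra_simps)
qed

definition id_comb :: "('r::comm_ring_1, factor) comb" where
  "id_comb = [(1, Affine 0 1)]"

text \<open>The index \<open>y \<in> {0, 1, 2}\<close> codes the pair \<open>(e, v) \<in> {(0, 1), (2, -1), (2, 1)}\<close> of \<open>SD_cube\<close>;
  the corresponding piece is \<open>x \<mapsto> (e + v x) / 3\<close>.\<close>

definition subdiv_offset :: "nat \<Rightarrow> int" where
  "subdiv_offset y = (if y = 0 then 0 else 2)"

definition subdiv_sign :: "nat \<Rightarrow> int" where
  "subdiv_sign y = (if y = 1 then -1 else 1)"

definition subdiv_piece :: "nat \<Rightarrow> factor" where
  "subdiv_piece y = Affine (subdiv_offset y / 3) (subdiv_sign y / 3)"

definition subdiv_comb :: "('r::comm_ring_1, factor) comb" where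
  "subdiv_comb = map (\<lambda>y. (of_int (subdiv_sign y), subdiv_piece y)) [0, 1, 2]"

text \<open>Two bilinear squares whose weighted boundaries are \<open>a (I - S)\<close> and \<open>b (I - S)\<close>, where
  \<open>I = id_comb\<close> and \<open>S = subdiv_comb\<close>: in each pair the faces carrying the other weight cancel.\<close>

definition homotopy_comb_a :: "('r::comm_ring_1, factor) comb" where
  "homotopy_comb_a = [(1, Bilinear 0 (1/3) 1 1), (1, Bilinear (2/3) 1 (1/3) 1)]"

definition homotopy_comb_b :: "('r::comm_ring_1, factor) comb" where
  "homotopy_comb_b = [(1, Bilinear 0 0 (2/3) 1), (1, Bilinear 0 (2/3) 0 (1/3))]"

lemma factor_bd_id_comb:
  "comb_sum G (comb_bind (factor_bd a b) id_comb) = comb_sum G (endpoints a b)"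
  by (simp add: id_comb_def endpoints_def)

lemma factor_bd_subdiv_comb:
  "comb_sum G (comb_bind (factor_bd a b) subdiv_comb) = comb_sum G (endpoints a b)"
  by (simp add: subdiv_comb_def subdiv_piece_def subdiv_offset_def subdiv_sign_def endpoints_def algebra_simps)

lemma factor_bd_homotopy_comb_a:
  "comb_sum G (comb_bind (factor_bd a b) homotopy_comb_a) = a * (comb_sum G id_comb - comb_sum G subdiv_comb)"
  by (simp add: homotopy_comb_a_def id_comb_def subdiv_comb_def subdiv_piece_def subdiv_offset_def
      subdiv_sign_def algebra_simps)

lemma factor_bd_homotopy_comb_b:
  "comb_sum G (comb_bind (factor_bd a b) homotopy_comb_b) = b * (comb_sum G id_comb - comb_sum G subdiv_comb)"
  by (simp add: homotopy_comb_b_def id_comb_def subdiv_comb_def subdiv_piece_def subdiv_offset_def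
      subdiv_sign_def algebra_simps)

lemma factors_of_id_comb: "(c, f) \<in> set id_comb \<Longrightarrow> factor_into_unit f \<and> factor_dim f = 1"
  by (auto simp: id_comb_def)

lemma factors_of_subdiv_comb: "(c, f) \<in> set subdiv_comb \<Longrightarrow> factor_into_unit f \<and> factor_dim f = 1"
  by (auto simp: subdiv_comb_def subdiv_piece_def subdiv_offset_def subdiv_sign_def)

definition subdiv_homotopy :: "'r::comm_ring_1 \<Rightarrow> 'r \<Rightarrow> 'r \<Rightarrow> ('r, factor) comb \<Rightarrow> bool" where
  "subdiv_homotopy a b lam K \<longleftrightarrow> (\<forall>(c, f) \<in> set K. factor_into_unit f \<and> factor_dim f = 2) \<and>
     (\<forall>G. comb_sum G (comb_bind (factor_bd a b) K) = lam * (comb_sum G id_comb - comb_sum G subdiv_comb))"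

lemma subdiv_homotopy_a: "subdiv_homotopy a b a homotopy_comb_a"
  unfolding subdiv_homotopy_def factor_bd_homotopy_comb_a by (simp add: homotopy_comb_a_def)

lemma subdiv_homotopy_b: "subdiv_homotopy a b b homotopy_comb_b"
  unfolding subdiv_homotopy_def factor_bd_homotopy_comb_b by (simp add: homotopy_comb_b_def)

lemma subdiv_homotopyD:
  assumes "subdiv_homotopy a b lam K"
  shows "comb_sum G (comb_bind (factor_bd a b) K) = lam * (comb_sum G id_comb - comb_sum G subdiv_comb)"
    and "(c, f) \<in> set K \<Longrightarrow> factor_into_unit f \<and> factor_dim f = 2"
  using assms unfolding subdiv_homotopy_def by blast+

primrec prism :: "('r::comm_ring_1, factor) comb \<Rightarrow> nat \<Rightarrow> ('r, factor list) comb" where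
  "prism K 0 = []"
| "prism K (Suc n) = comb_tensor K (comb_power id_comb n) @ comb_smult (-1) (comb_tensor subdiv_comb (prism K n))"

lemma comb_bd_unit: "comb_sum G (comb_bd a b [(1, [])]) = 0"
  by (simp add: comb_bd_def comb_sum_word_bd)

lemma comb_target_bd_unit: "comb_sum G (comb_target_bd a b [(1, [])]) = a * G [Const 0] + b * G [Const 1]"
  by (simp add: comb_target_bd_def comb_sum_word_target_bd)

lemma comb_bd_tensor_path:
  assumes bd_X: "\<And>G. comb_sum G (comb_bind (factor_bd a b) X) = comb_sum G (endpoints a b)"
    and dim_X: "\<And>c f. (c, f) \<in> set X \<Longrightarrow> factor_dim f = 1"
  shows "comb_sum G (comb_bd a b (comb_tensor X Y)) =
    comb_sum G (comb_tensor (endpoints a b) Y) - comb_sum G (comb_tensor X (comb_bd a b Y))"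
proof -
  have "comb_sum G (comb_tensor (comb_bind (factor_bd a b) X) Y) = comb_sum G (comb_tensor (endpoints a b) Y)"
    using bd_X by (rule comb_sum_comb_tensor_cong) (rule refl)
  then show ?thesis by (simp only: comb_bd_tensor[OF dim_X]) simp
qed

lemma comb_bd_comb_power:
  assumes bd_X: "\<And>G. comb_sum G (comb_bind (factor_bd a b) X) = comb_sum G (endpoints a b)"
    and dim_X: "\<And>c f. (c, f) \<in> set X \<Longrightarrow> factor_dim f = 1"
  shows "comb_sum G (comb_bd a b (comb_power X (Suc n))) = comb_sum G (comb_target_bd a b (comb_power X n))"
proof (induction n arbitrary: G)
  case 0
  show ?case
    by (simp add: comb_bd_tensor_path[OF bd_X dim_X] comb_bd_unit comb_sum_zero_fun comb_target_bd_unit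
        endpoints_def)
next
  case (Suc n)
  have "comb_sum G (comb_bd a b (comb_power X (Suc (Suc n)))) =
      comb_sum G (comb_tensor (endpoints a b) (comb_power X (Suc n)))
    - comb_sum G (comb_tensor X (comb_target_bd a b (comb_power X n)))"
    using Suc.IH by (simp only: comb_power.simps(2)[of X "Suc n"] comb_bd_tensor_path[OF bd_X dim_X]
        comb_sum_comb_tensor)
  also have "\<dots> = comb_sum G (comb_target_bd a b (comb_power X (Suc n)))"
    by (simp only: comb_power.simps(2)[of X n] comb_target_bd_tensor)
  finally show ?case .
qed

lemma comb_sum_comb_bd_append:
  "comb_sum G (comb_bd a b (L1 @ L2)) = comb_sum G (comb_bd a b L1) + comb_sum G (comb_bd a b L2)"
  and comb_sum_comb_bd_smult: "comb_sum G (comb_bd a b (comb_smult r L)) = r * comb_sum G (comb_bd a b L)"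
  and comb_sum_comb_target_bd_append:
  "comb_sum G (comb_target_bd a b (L1 @ L2)) = comb_sum G (comb_target_bd a b L1) + comb_sum G (comb_target_bd a b L2)"
  and comb_sum_comb_target_bd_smult:
  "comb_sum G (comb_target_bd a b (comb_smult r L)) = r * comb_sum G (comb_target_bd a b L)"
  by (simp_all add: comb_bd_def comb_target_bd_def)

lemma comb_bd_tensor_homotopy:
  assumes "subdiv_homotopy a b lam K"
  shows "comb_sum G (comb_bd a b (comb_tensor K Y)) =
      lam * (comb_sum G (comb_tensor id_comb Y) - comb_sum G (comb_tensor subdiv_comb Y))
    + comb_sum G (comb_tensor K (comb_bd a b Y))"
proof -
  have "\<And>c f. (c, f) \<in> set K \<Longrightarrow> factor_dim f = 2"
    using subdiv_homotopyD(2)[OF assms] by blast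
  then show ?thesis
    by (simp only: comb_bd_tensor comb_sum_comb_tensor subdiv_homotopyD(1)[OF assms]) simp
qed

lemma comb_target_bd_prism_Suc:
  "comb_sum G (comb_target_bd a b (prism K (Suc n))) =
      comb_sum G (comb_tensor (endpoints a b) (prism K (Suc n)))
    - comb_sum G (comb_tensor K (comb_target_bd a b (comb_power id_comb n)))
    + comb_sum G (comb_tensor subdiv_comb (comb_target_bd a b (prism K n)))"
  by (simp only: prism.simps(2)[of K n] comb_sum_comb_target_bd_append comb_sum_comb_target_bd_smult
      comb_target_bd_tensor) (simp add: comb_sum_add_fun comb_sum_diff_fun comb_sum_cmult_fun)

lemma comb_bd_prism_Suc:
  assumes K: "subdiv_homotopy a b lam K"
  shows "comb_sum G (comb_bd a b (prism K (Suc n))) =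
     lam * (comb_sum G (comb_power id_comb (Suc n)) - comb_sum G (comb_power subdiv_comb (Suc n)))
     - comb_sum G (comb_target_bd a b (prism K n))"
proof (induction n arbitrary: G)
  case 0
  show ?case
    by (simp add: comb_sum_comb_bd_append comb_sum_comb_bd_smult comb_bd_tensor_homotopy[OF K]
        comb_bd_unit comb_sum_zero_fun) (simp add: comb_bd_def comb_target_bd_def)
next
  case (Suc n)
  let ?I = "comb_power id_comb" and ?S = "comb_power subdiv_comb" and ?P = "prism K"
  have dim_S: "\<And>c f. (c, f) \<in> set subdiv_comb \<Longrightarrow> factor_dim f = 1"
    and dim_I: "\<And>c f. (c, f) \<in> set id_comb \<Longrightarrow> factor_dim f = 1"
    using factors_of_subdiv_comb factors_of_id_comb by blast+
  have "comb_sum G (comb_bd a b (?P (Suc (Suc n)))) =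
      lam * (comb_sum G (?I (Suc (Suc n))) - comb_sum G (comb_tensor subdiv_comb (?I (Suc n))))
    + comb_sum G (comb_tensor K (comb_target_bd a b (?I n)))
    - comb_sum G (comb_tensor (endpoints a b) (?P (Suc n)))
    + comb_sum G (comb_tensor subdiv_comb (comb_bd a b (?P (Suc n))))"
    by (simp only: prism.simps(2)[of K "Suc n"] comb_sum_comb_bd_append comb_sum_comb_bd_smult
        comb_bd_tensor_homotopy[OF K] comb_bd_tensor_path[OF factor_bd_subdiv_comb dim_S]
        comb_power.simps(2)[of id_comb "Suc n"] comb_sum_comb_tensor
        comb_bd_comb_power[OF factor_bd_id_comb dim_I]) (simp add: algebra_simps)
  also have "comb_sum G (comb_tensor subdiv_comb (comb_bd a b (?P (Suc n)))) =
      lam * (comb_sum G (comb_tensor subdiv_comb (?I (Suc n))) - comb_sum G (?S (Suc (Suc n))))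
    - comb_sum G (comb_tensor subdiv_comb (comb_target_bd a b (?P n)))"
    by (simp only: comb_sum_comb_tensor Suc.IH comb_power.simps(2)[of subdiv_comb "Suc n"])
       (simp add: comb_sum_diff_fun comb_sum_cmult_fun)
  also have "comb_sum G (comb_tensor (endpoints a b) (?P (Suc n))) =
      comb_sum G (comb_target_bd a b (?P (Suc n)))
    + comb_sum G (comb_tensor K (comb_target_bd a b (?I n)))
    - comb_sum G (comb_tensor subdiv_comb (comb_target_bd a b (?P n)))"
    by (simp only: comb_target_bd_prism_Suc) (simp add: algebra_simps)
  finally show ?case
    by (simp add: algebra_simps)
qed

lemma comb_bd_prism:
  assumes "subdiv_homotopy a b lam K"
  shows "comb_sum G (comb_bd a b (prism K n)) =
      lam * (comb_sum G (comb_power id_comb n) - comb_sum G (comb_power subdiv_comb n))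
    - comb_sum G (comb_target_bd a b (prism K (n - 1)))"
proof (cases n)
  case 0
  then show ?thesis by (simp add: comb_bd_def comb_target_bd_def)
next
  case (Suc m)
  then show ?thesis by (simp only: comb_bd_prism_Suc[OF assms] diff_Suc_1)
qed

section \<open>Realising words as maps of cubes\<close>

fun word_map :: "factor list \<Rightarrow> (nat \<Rightarrow> real) \<Rightarrow> (nat \<Rightarrow> real)" where
  "word_map [] x = (\<lambda>_. 0)"
| "word_map (f # w) x =
    (\<lambda>k. if k = 0 then factor_eval f x else word_map w (\<lambda>i. x (i + factor_dim f)) (k - 1))"

lemma factor_eval_factor_face:
  "p < factor_dim f \<Longrightarrow> factor_eval (factor_face p i f) x = factor_eval f (insert_coord p i x)"
  by (cases f) (auto simp: insert_coord_def algebra_simps)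

lemma factor_dim_factor_face: "p < factor_dim f \<Longrightarrow> factor_dim (factor_face p i f) = factor_dim f - 1"
  by (cases f) auto

lemma shift_factor_face:
  "p < factor_dim f \<Longrightarrow>
     (\<lambda>j. x (j + factor_dim (factor_face p i f))) = (\<lambda>j. insert_coord p i x (j + factor_dim f))"
  by (cases f) (auto simp: insert_coord_def)

lemma factor_eval_insert_coord: "factor_dim f \<le> p \<Longrightarrow> factor_eval f (insert_coord p i x) = factor_eval f x"
  by (cases f) (auto simp: insert_coord_def)

lemma shift_insert_coord:
  "d \<le> p \<Longrightarrow> (\<lambda>j. insert_coord p i x (j + d)) = insert_coord (p - d) i (\<lambda>j. x (j + d))"
  by (auto simp: insert_coord_def fun_eq_iff)

lemma word_dim_word_face: "p < word_dim w \<Longrightarrow> word_dim (word_face p i w) = word_dim w - 1"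
  by (induction w arbitrary: p) (auto simp: factor_dim_factor_face)

lemma word_map_word_face: "p < word_dim w \<Longrightarrow> word_map (word_face p i w) x = word_map w (insert_coord p i x)"
proof (induction w arbitrary: p x)
  case (Cons f w)
  show ?case
  proof (cases "p < factor_dim f")
    case True
    then show ?thesis by (auto simp: factor_eval_factor_face shift_factor_face fun_eq_iff)
  next
    case False
    with Cons.prems have "p - factor_dim f < word_dim w" by simp
    with False show ?thesis
      by (auto simp: factor_eval_insert_coord Cons.IH shift_insert_coord fun_eq_iff)
  qed
qed simp

lemma word_dim_insert_const [simp]: "word_dim (insert_const p r u) = word_dim u"
  by (induction p r u rule: insert_const.induct) auto

lemma word_map_insert_const: "p \<le> length u \<Longrightarrow> word_map (insert_const p r u) x = insert_coord p r (word_map u x)"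
proof (induction u arbitrary: p x)
  case Nil
  then show ?case by (auto simp: insert_coord_def fun_eq_iff)
next
  case (Cons f u)
  then show ?case
    by (cases p) (auto simp: insert_coord_def fun_eq_iff)
qed

lemma convex_comb_in_unit_interval:
  fixes t p q :: real
  assumes "0 \<le> t" "t \<le> 1" "0 \<le> p" "p \<le> 1" "0 \<le> q" "q \<le> 1"
  shows "0 \<le> (1 - t) * p + t * q \<and> (1 - t) * p + t * q \<le> 1"
proof -
  have "(1 - t) * p \<le> 1 - t" "t * q \<le> t"
    using assms by (auto intro: mult_left_le)
  then show ?thesis using assms by auto
qed

lemma factor_eval_in_unit_interval:
  assumes "factor_into_unit f" "\<And>i. i < factor_dim f \<Longrightarrow> 0 \<le> x i \<and> x i \<le> 1"
  shows "0 \<le> factor_eval f x \<and> factor_eval f x \<le> 1"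
proof (cases f)
  case (Affine \<alpha> \<beta>)
  then have "factor_eval f x = (1 - x 0) * \<alpha> + x 0 * (\<alpha> + \<beta>)" by (simp add: algebra_simps)
  then show ?thesis using assms Affine by (simp add: convex_comb_in_unit_interval)
next
  case (Bilinear c00 c10 c01 c11)
  with assms have "0 \<le> x 0" "x 0 \<le> 1" "0 \<le> x 1" "x 1 \<le> 1" by auto
  with assms Bilinear show ?thesis
    by (simp only: factor_eval.simps) (intro convex_comb_in_unit_interval, auto simp: convex_comb_in_unit_interval)
qed (use assms in auto)

lemma word_map_in_cube: "word_into_unit w \<Longrightarrow> x \<in> cube (word_dim w) \<Longrightarrow> word_map w x \<in> cube (length w)"
proof (induction w arbitrary: x)
  case Nil
  then show ?case by (simp add: cube_def)
next
  case (Cons f w)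
  then have "(\<lambda>i. x (i + factor_dim f)) \<in> cube (word_dim w)"
    by (auto simp: cube_def)
  with Cons have "word_map w (\<lambda>i. x (i + factor_dim f)) \<in> cube (length w)"
    by (auto simp: word_into_unit_def)
  moreover have "0 \<le> factor_eval f x \<and> factor_eval f x \<le> 1"
    using Cons.prems by (intro factor_eval_in_unit_interval) (auto simp: word_into_unit_def cube_def)
  ultimately show ?case by (auto simp: cube_def)
qed

lemma continuous_map_factor_eval: "continuous_map (powertop_real UNIV) euclideanreal (factor_eval f)"
proof -
  have "factor_eval f = (case f of
      Const r \<Rightarrow> (\<lambda>x. r)
    | Affine \<alpha> \<beta> \<Rightarrow> (\<lambda>x. \<alpha> + \<beta> * x 0)
    | Bilinear c00 c10 c01 c11 \<Rightarrow>
        (\<lambda>x. (1 - x 0) * ((1 - x 1) * c00 + x 1 * c01) + x 0 * ((1 - x 1) * c10 + x 1 * c11)))"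
    by (cases f) (simp_all add: fun_eq_iff)
  then show ?thesis
    by (simp split: factor.split add: continuous_map_coord continuous_map_add continuous_map_diff
        continuous_map_real_mult)
qed

lemma continuous_map_word_map: "continuous_map (powertop_real UNIV) (powertop_real UNIV) (word_map w)"
  unfolding continuous_map_componentwise_UNIV
proof
  fix k
  show "continuous_map (powertop_real UNIV) euclideanreal (\<lambda>x. word_map w x k)"
  proof (induction w arbitrary: k)
    case (Cons f w)
    have shift: "continuous_map (powertop_real UNIV) (powertop_real UNIV) (\<lambda>x i. x (i + factor_dim f))"
      unfolding continuous_map_componentwise_UNIV by (simp add: continuous_map_coord)
    show ?case
    proof (cases "k = 0")
      case True
      then show ?thesis by (simp add: continuous_map_factor_eval)
    next
      case False
      then have "(\<lambda>x. word_map (f # w) x k) = (\<lambda>x. word_map w x (k - 1)) \<circ> (\<lambda>x i. x (i + factor_dim f))"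
        by (simp add: o_def)
      with continuous_map_compose[OF shift Cons.IH] show ?thesis by simp
    qed
  qed simp
qed

definition comp_word :: "((nat \<Rightarrow> real) \<Rightarrow> 'a) \<Rightarrow> factor list \<Rightarrow> ((nat \<Rightarrow> real) \<Rightarrow> 'a)" where
  "comp_word T w = restrict (T \<circ> word_map w) (cube (word_dim w))"

lemma comp_word_in_sing_cubes:
  assumes "T \<in> sing_cubes n X" "word_into_unit w" "length w = n"
  shows "comp_word T w \<in> sing_cubes (word_dim w) X"
  unfolding comp_word_def
  using assms word_map_in_cube by (intro restrict_comp_in_sing_cubes continuous_map_word_map) auto

lemma face_comp_word:
  assumes "1 \<le> j" "j \<le> word_dim w" "i = 0 \<or> i = 1"
  shows "face (word_dim w) i j (comp_word T w) = comp_word T (word_face (j - 1) i w)"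
proof -
  have "insert_coord (j - 1) i x \<in> cube (word_dim w)" if "x \<in> cube (word_dim w - 1)" for x
    using assms that insert_coord_in_cube[of "j - 1" "word_dim w - 1" i x] by auto
  moreover have "word_map (word_face (j - 1) i w) x = word_map w (insert_coord (j - 1) i x)" for x
    using assms by (intro word_map_word_face) auto
  moreover have dim: "word_dim (word_face (j - 1) i w) = word_dim w - 1"
    using assms by (intro word_dim_word_face) auto
  ultimately show ?thesis
    unfolding face_eq_insert_coord comp_word_def dim by (intro restrict_ext) simp_all
qed

lemma comp_word_face:
  assumes "word_into_unit u" "length u = m" "1 \<le> j" "j \<le> Suc m" "i = 0 \<or> i = 1"
  shows "comp_word (face (Suc m) i j T) u = comp_word T (insert_const (j - 1) i u)"
  unfolding comp_word_def word_dim_insert_const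
proof (intro restrict_ext)
  fix x assume "x \<in> cube (word_dim u)"
  then have "word_map u x \<in> cube m" using word_map_in_cube assms by blast
  then show "(face (Suc m) i j T \<circ> word_map u) x = (T \<circ> word_map (insert_const (j - 1) i u)) x"
    using assms by (simp add: face_eq_insert_coord word_map_insert_const)
qed

definition realize :: "((nat \<Rightarrow> real) \<Rightarrow> 'a) \<Rightarrow> ('r::comm_ring_1, factor list) comb \<Rightarrow> ('a, 'r) chain" where
  "realize T L = (\<lambda>S. comb_sum (\<lambda>w. basis_chain (comp_word T w) S) L)"

lemma realize_Nil [simp]: "realize T [] = 0"
  and realize_Cons: "realize T ((c, w) # L) = smult_chain c (basis_chain (comp_word T w)) + realize T L"
  and realize_append: "realize T (L1 @ L2) = realize T L1 + realize T L2"
  and realize_comb_smult: "realize T (comb_smult r L) = smult_chain r (realize T L)"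
  by (simp_all add: realize_def smult_chain_def plus_fun_def zero_fun_def)

lemma realize_cong: "(\<And>G. comb_sum G L1 = comb_sum G L2) \<Longrightarrow> realize T L1 = realize T L2"
  by (simp add: realize_def)

lemma finite_support_realize: "finite_support (realize T L)"
proof (induction L)
  case (Cons x L)
  obtain c w where "x = (c, w)" by force
  with Cons show ?case
    by (simp only: realize_Cons) (intro finite_support_add finite_support_smult finite_support_basis_chain)
qed (simp only: realize_Nil finite_support_zero)

lemma is_chain_realize:
  assumes "T \<in> sing_cubes n X" "\<And>c w. (c, w) \<in> set L \<Longrightarrow> word_into_unit w \<and> length w = n \<and> word_dim w = m"
  shows "is_chain X m (realize T L)"
  using assms(2)
proof (induction L)
  case Nil
  show ?case by (simp only: realize_Nil is_chain_zero)
next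
  case (Cons x L)
  obtain c w where x: "x = (c, w)" by force
  with Cons.prems have "comp_word T w \<in> sing_cubes m X"
    using comp_word_in_sing_cubes[OF assms(1)] by fastforce
  with Cons show ?case unfolding x realize_Cons
    by (intro is_chain_add is_chain_smult is_chain_basis_chain) auto
qed

lemma lin_ext_realize: "lin_ext g (realize T L) = (\<lambda>S. comb_sum (\<lambda>w. g (comp_word T w) S) L)"
proof (induction L)
  case (Cons x L)
  obtain c w where "x = (c, w)" by force
  with Cons.IH show ?case
    by (simp only: realize_Cons lin_ext_add[OF finite_support_smult[OF finite_support_basis_chain]
        finite_support_realize] lin_ext_smult[OF finite_support_basis_chain] lin_ext_basis_chain)
       (simp add: smult_chain_def plus_fun_def)
qed (simp only: realize_Nil lin_ext_zero comb_sum_Nil, simp add: zero_fun_def)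

lemma bd_realize:
  assumes "m \<noteq> 0" "\<And>c w. (c, w) \<in> set L \<Longrightarrow> word_dim w = m"
  shows "bd a b m (realize T L) = realize T (comb_bd a b L)"
proof -
  have "bd a b m (realize T L) = (\<lambda>S. comb_sum (\<lambda>w. bd_cube a b m (comp_word T w) S) L)"
    using assms by (simp add: bd_def lin_ext_realize)
  also have "\<dots> = (\<lambda>S. comb_sum (\<lambda>w. comb_sum (\<lambda>u. basis_chain (comp_word T u) S) (word_bd a b w)) L)"
  proof (intro ext comb_sum_cong)
    fix S c w assume "(c, w) \<in> set L"
    with assms have "word_dim w = m" by auto
    then show "bd_cube a b m (comp_word T w) S = comb_sum (\<lambda>u. basis_chain (comp_word T u) S) (word_bd a b w)"
      unfolding comb_sum_word_bd bd_cube_def by (intro sum.cong refl) (auto simp: face_comp_word)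
  qed
  also have "\<dots> = realize T (comb_bd a b L)"
    by (simp add: realize_def comb_bd_def)
  finally show ?thesis .
qed

lemma lin_ext_realize_bd_cube:
  assumes "\<And>c u. (c, u) \<in> set Y \<Longrightarrow> word_into_unit u \<and> length u = m"
  shows "lin_ext (\<lambda>T'. realize T' Y) (bd_cube a b (Suc m) T) = realize T (comb_target_bd a b Y)"
proof
  fix S
  let ?G = "\<lambda>u. basis_chain (comp_word T u) S"
  have face: "realize (face (Suc m) i j T) Y S = comb_sum (\<lambda>u. ?G (insert_const (j - 1) i u)) Y"
    if "1 \<le> j" "j \<le> Suc m" "i = 0 \<or> i = 1" for i j
    unfolding realize_def using that assms by (intro comb_sum_cong) (simp add: comp_word_face)
  have "lin_ext (\<lambda>T'. realize T' Y) (bd_cube a b (Suc m) T) S =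
     (\<Sum>j\<in>{1..Suc m}. (-1)^(j+1) * (a * comb_sum (\<lambda>u. ?G (insert_const (j - 1) 0 u)) Y
                                   + b * comb_sum (\<lambda>u. ?G (insert_const (j - 1) 1 u)) Y))"
    unfolding lin_ext_bd_cube by (intro sum.cong refl) (simp add: face)
  also have "\<dots> = (\<Sum>j<Suc m. (-1)^j * (a * comb_sum (\<lambda>u. ?G (insert_const j 0 u)) Y
                                    + b * comb_sum (\<lambda>u. ?G (insert_const j 1 u)) Y))"
    by (simp only: One_nat_def sum.atLeast1_atMost_eq) simp
  also have "\<dots> = comb_sum (\<lambda>u. comb_sum ?G (word_target_bd a b u)) Y"
    using assms
    by (simp add: comb_sum_word_target_bd comb_sum_sum_fun comb_sum_add_fun comb_sum_cmult_fun cong: comb_sum_cong)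
  also have "\<dots> = realize T (comb_target_bd a b Y) S"
    by (simp add: realize_def comb_target_bd_def)
  finally show "lin_ext (\<lambda>T'. realize T' Y) (bd_cube a b (Suc m) T) S = realize T (comb_target_bd a b Y) S" .
qed

section \<open>Realising powers of the identity and of the subdivision\<close>

lemma word_map_of_dim_one:
  assumes "\<And>f. f \<in> set w \<Longrightarrow> factor_dim f = 1"
  shows "word_map w x = (\<lambda>k. if k < length w then factor_eval (w ! k) (\<lambda>i. x (i + k)) else 0)"
  using assms
proof (induction w arbitrary: x)
  case (Cons f w)
  then have "factor_dim f = 1" by simp
  with Cons show ?case
    by (auto simp: fun_eq_iff nth_Cons' add.assoc)
qed simp

lemma word_dim_of_dim_one: "(\<And>f. f \<in> set w \<Longrightarrow> factor_dim f = 1) \<Longrightarrow> word_dim w = length w"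
  by (induction w) auto

lemma comb_power_id_comb: "comb_power id_comb n = [(1, replicate n (Affine 0 1))]"
  by (induction n) (auto simp: comb_tensor_def id_comb_def)

lemma realize_comb_power_id_comb:
  assumes "T \<in> extensional (cube n)"
  shows "realize T (comb_power id_comb n) = basis_chain T"
proof -
  let ?w = "replicate n (Affine 0 1)"
  have dim: "word_dim ?w = n" by (simp add: word_dim_def sum_list_replicate)
  have "comp_word T ?w = T"
  proof
    fix x
    show "comp_word T ?w x = T x"
    proof (cases "x \<in> cube n")
      case True
      then have "word_map ?w x = x"
        by (subst word_map_of_dim_one) (auto simp: cube_def)
      with True show ?thesis by (simp add: comp_word_def dim)
    next
      case False
      with assms show ?thesis by (simp add: comp_word_def dim extensional_def)
    qed
  qed
  then show ?thesis
    by (simp add: realize_def comb_power_id_comb)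
qed

definition subdiv_word :: "nat \<Rightarrow> (nat \<Rightarrow> nat) \<Rightarrow> factor list" where
  "subdiv_word n c = map (\<lambda>i. subdiv_piece (c i)) [0..<n]"

lemma comb_sum_comb_power_Suc_snoc:
  "comb_sum G (comb_power X (Suc n)) = comb_sum (\<lambda>f. comb_sum (\<lambda>u. G (u @ [f])) (comb_power X n)) X"
proof (induction n arbitrary: G)
  case (Suc n)
  have "comb_sum G (comb_power X (Suc (Suc n))) = comb_sum (\<lambda>f. comb_sum (\<lambda>u. G (f # u)) (comb_power X (Suc n))) X"
    by simp
  also have "\<dots> = comb_sum (\<lambda>f. comb_sum (\<lambda>g. comb_sum (\<lambda>u. G (f # u @ [g])) (comb_power X n)) X) X"
    by (simp only: Suc.IH)
  also have "\<dots> = comb_sum (\<lambda>g. comb_sum (\<lambda>f. comb_sum (\<lambda>u. G (f # u @ [g])) (comb_power X n)) X) X"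
    by (rule comb_sum_swap)
  also have "\<dots> = comb_sum (\<lambda>g. comb_sum (\<lambda>v. G (v @ [g])) (comb_power X (Suc n))) X"
    by simp
  finally show ?case .
qed simp

lemma sum_PiE_lessThan_Suc:
  assumes "finite A"
  shows "(\<Sum>c\<in>{..<Suc n} \<rightarrow>\<^sub>E A. F c) = (\<Sum>y\<in>A. \<Sum>g\<in>{..<n} \<rightarrow>\<^sub>E A. F (g(n := y)))"
proof -
  have "{..<Suc n} \<rightarrow>\<^sub>E A = (\<lambda>(y, g). g(n := y)) ` (A \<times> ({..<n} \<rightarrow>\<^sub>E A))"
    unfolding lessThan_Suc by (rule PiE_insert_eq)
  moreover have "inj_on (\<lambda>(y, g). g(n := y)) (A \<times> ({..<n} \<rightarrow>\<^sub>E A))"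
    using inj_combinator[of n "{..<n}" "\<lambda>_. A"] by simp
  ultimately show ?thesis
    by (simp add: sum.reindex sum.cartesian_product split_def)
qed

lemma comb_sum_comb_power_subdiv_comb:
  "comb_sum G (comb_power subdiv_comb n) =
     (\<Sum>c\<in>{..<n} \<rightarrow>\<^sub>E {0, 1, 2}. (\<Prod>i<n. of_int (subdiv_sign (c i))) * G (subdiv_word n c))"
proof (induction n arbitrary: G)
  case 0
  then show ?case by (simp add: subdiv_word_def)
next
  case (Suc n)
  have "comb_sum G (comb_power subdiv_comb (Suc n)) =
      (\<Sum>y\<in>{0, 1, 2}. of_int (subdiv_sign y) * comb_sum (\<lambda>u. G (u @ [subdiv_piece y])) (comb_power subdiv_comb n))"
    by (simp only: comb_sum_comb_power_Suc_snoc) (simp add: subdiv_comb_def)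
  also have "\<dots> = (\<Sum>y\<in>{0, 1, 2}. \<Sum>g\<in>{..<n} \<rightarrow>\<^sub>E {0, 1, 2}.
      of_int (subdiv_sign y) * ((\<Prod>i<n. of_int (subdiv_sign (g i))) * G (subdiv_word n g @ [subdiv_piece y])))"
    by (simp only: Suc.IH sum_distrib_left)
  also have "\<dots> = (\<Sum>y\<in>{0, 1, 2}. \<Sum>g\<in>{..<n} \<rightarrow>\<^sub>E {0, 1, 2}.
      (\<Prod>i<Suc n. of_int (subdiv_sign ((g(n := y)) i))) * G (subdiv_word (Suc n) (g(n := y))))"
  proof (intro sum.cong refl)
    fix y g
    have "subdiv_word (Suc n) (g(n := y)) = subdiv_word n g @ [subdiv_piece y]"
      by (simp add: subdiv_word_def)
    then show "of_int (subdiv_sign y) * ((\<Prod>i<n. of_int (subdiv_sign (g i))) * G (subdiv_word n g @ [subdiv_piece y]))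
        = (\<Prod>i<Suc n. of_int (subdiv_sign ((g(n := y)) i))) * G (subdiv_word (Suc n) (g(n := y)))"
      by (simp add: prod.lessThan_Suc mult_ac)
  qed
  also have "\<dots> = (\<Sum>c\<in>{..<Suc n} \<rightarrow>\<^sub>E {0, 1, 2}. (\<Prod>i<Suc n. of_int (subdiv_sign (c i))) * G (subdiv_word (Suc n) c))"
    by (rule sum_PiE_lessThan_Suc[symmetric]) simp
  finally show ?case .
qed

definition subdiv_codes :: "nat \<Rightarrow> (nat \<Rightarrow> nat) \<Rightarrow> (nat \<Rightarrow> int) \<times> (nat \<Rightarrow> int)" where
  "subdiv_codes n c = (restrict (subdiv_offset \<circ> c) {..<n}, restrict (subdiv_sign \<circ> c) {..<n})"

definition subdiv_index :: "nat \<Rightarrow> (nat \<Rightarrow> int) \<times> (nat \<Rightarrow> int) \<Rightarrow> nat \<Rightarrow> nat" where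
  "subdiv_index n ev = restrict (\<lambda>i. if fst ev i = 0 then 0 else if snd ev i = -1 then 1 else 2) {..<n}"

lemma subdiv_index_subdiv_codes:
  assumes c: "c \<in> {..<n} \<rightarrow>\<^sub>E {0, 1, 2}"
  shows "subdiv_index n (subdiv_codes n c) = c"
proof
  fix i
  show "subdiv_index n (subdiv_codes n c) i = c i"
  proof (cases "i < n")
    case True
    then have "c i = 0 \<or> c i = 1 \<or> c i = 2" using PiE_mem[OF c, of i] by simp
    with True show ?thesis
      by (auto simp: subdiv_index_def subdiv_codes_def subdiv_offset_def subdiv_sign_def)
  next
    case False
    then show ?thesis using PiE_arb[OF c, of i] by (simp add: subdiv_index_def)
  qed
qed

lemma subdiv_codes_subdiv_index:
  assumes e: "e \<in> {..<n} \<rightarrow>\<^sub>E {0, 2}" and "v \<in> Vset n e"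
  shows "subdiv_codes n (subdiv_index n (e, v)) = (e, v)"
proof -
  from assms have v: "v \<in> {..<n} \<rightarrow>\<^sub>E {-1, 1}" "\<And>i. i < n \<Longrightarrow> e i = 0 \<Longrightarrow> v i = 1"
    by (auto simp: Vset_def)
  have "restrict (subdiv_offset \<circ> subdiv_index n (e, v)) {..<n} i = e i" for i
  proof (cases "i < n")
    case True
    then have "e i = 0 \<or> e i = 2" using PiE_mem[OF e, of i] by simp
    with True show ?thesis by (auto simp: subdiv_index_def subdiv_offset_def)
  next
    case False
    then show ?thesis using PiE_arb[OF e, of i] by simp
  qed
  moreover have "restrict (subdiv_sign \<circ> subdiv_index n (e, v)) {..<n} i = v i" for i
  proof (cases "i < n")
    case True
    then have "e i = 0 \<or> e i = 2" "v i = -1 \<or> v i = 1"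
      using PiE_mem[OF e, of i] PiE_mem[OF v(1), of i] by simp_all
    with True v(2) show ?thesis by (auto simp: subdiv_index_def subdiv_sign_def)
  next
    case False
    then show ?thesis using PiE_arb[OF v(1), of i] by simp
  qed
  ultimately show ?thesis
    by (simp add: subdiv_codes_def fun_eq_iff del: restrict_apply)
qed

lemma bij_betw_subdiv_codes:
  "bij_betw (subdiv_codes n) ({..<n} \<rightarrow>\<^sub>E {0, 1, 2}) (SIGMA e:{..<n} \<rightarrow>\<^sub>E {0, 2}. Vset n e)"
proof (rule bij_betw_byWitness[where f' = "subdiv_index n"])
  show "subdiv_codes n ` ({..<n} \<rightarrow>\<^sub>E {0, 1, 2}) \<subseteq> (SIGMA e:{..<n} \<rightarrow>\<^sub>E {0, 2}. Vset n e)"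
  proof (rule image_subsetI)
    fix c :: "nat \<Rightarrow> nat"
    have "restrict (subdiv_offset \<circ> c) {..<n} \<in> {..<n} \<rightarrow>\<^sub>E {0, 2}"
      by (simp add: subdiv_offset_def)
    moreover have "restrict (subdiv_sign \<circ> c) {..<n} \<in> Vset n (restrict (subdiv_offset \<circ> c) {..<n})"
      by (simp add: Vset_def subdiv_offset_def subdiv_sign_def)
    ultimately show "subdiv_codes n c \<in> (SIGMA e:{..<n} \<rightarrow>\<^sub>E {0, 2}. Vset n e)"
      by (simp add: subdiv_codes_def)
  qed
  show "subdiv_index n ` (SIGMA e:{..<n} \<rightarrow>\<^sub>E {0, 2}. Vset n e) \<subseteq> {..<n} \<rightarrow>\<^sub>E {0, 1, 2}"
    by (rule image_subsetI) (simp add: subdiv_index_def)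
qed (auto simp: subdiv_index_subdiv_codes subdiv_codes_subdiv_index)

lemma hmap_subdiv_codes:
  "hmap n (fst (subdiv_codes n c)) (snd (subdiv_codes n c)) = word_map (subdiv_word n c)"
proof (intro ext)
  fix x k
  have "word_map (subdiv_word n c) x = (\<lambda>k. if k < n then factor_eval (subdiv_piece (c k)) (\<lambda>i. x (i + k)) else 0)"
    by (subst word_map_of_dim_one) (auto simp: subdiv_word_def subdiv_piece_def)
  then show "hmap n (fst (subdiv_codes n c)) (snd (subdiv_codes n c)) x k = word_map (subdiv_word n c) x k"
    by (simp add: hmap_def subdiv_codes_def subdiv_piece_def add_divide_distrib)
qed

lemma SD_cube_eq_realize:
  fixes T :: "(nat \<Rightarrow> real) \<Rightarrow> 'a"
  assumes "T \<in> extensional (cube n)"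
  shows "(SD_cube n T :: ('a, 'r::comm_ring_1) chain) = smult_chain (-1) (realize T (comb_power subdiv_comb n))"
proof (cases "n = 0")
  case True
  then have "realize T (comb_power subdiv_comb n) = (basis_chain T :: ('a, 'r) chain)"
    using realize_comb_power_id_comb[OF assms] by simp
  with True show ?thesis
    by (simp add: SD_cube_def smult_chain_def)
next
  case False
  show ?thesis
  proof
    fix S
    let ?G = "\<lambda>u. basis_chain (comp_word T u) S :: 'r"
    let ?F = "\<lambda>(e, v). - (\<Prod>i<n. of_int (v i)) * basis_chain (restrict (T \<circ> hmap n e v) (cube n)) S :: 'r"
    have fin: "finite ({..<n} \<rightarrow>\<^sub>E {0::int, 2})" "\<And>e. finite (Vset n e)"
      by (auto intro: finite_subset[of _ "{..<n} \<rightarrow>\<^sub>E {-1::int, 1}"] simp: Vset_def finite_PiE)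
    have "SD_cube n T S = (\<Sum>ev\<in>(SIGMA e:{..<n} \<rightarrow>\<^sub>E {0, 2}. Vset n e). ?F ev)"
      using False by (simp add: SD_cube_def sum.Sigma[OF fin(1)] fin(2) split_def)
    also have "\<dots> = (\<Sum>c\<in>{..<n} \<rightarrow>\<^sub>E {0, 1, 2}. ?F (subdiv_codes n c))"
      by (rule sum.reindex_bij_betw[OF bij_betw_subdiv_codes, symmetric])
    also have "\<dots> = (\<Sum>c\<in>{..<n} \<rightarrow>\<^sub>E {0, 1, 2}. - ((\<Prod>i<n. of_int (subdiv_sign (c i))) * ?G (subdiv_word n c)))"
    proof (intro sum.cong refl)
      fix c
      have "word_dim (subdiv_word n c) = n"
        by (subst word_dim_of_dim_one) (auto simp: subdiv_word_def subdiv_piece_def)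
      moreover have "(\<Prod>i<n. of_int (snd (subdiv_codes n c) i)) = (\<Prod>i<n. of_int (subdiv_sign (c i)) :: 'r)"
        by (intro prod.cong refl) (simp add: subdiv_codes_def)
      ultimately show "?F (subdiv_codes n c) = - ((\<Prod>i<n. of_int (subdiv_sign (c i))) * ?G (subdiv_word n c))"
        unfolding split_def hmap_subdiv_codes comp_word_def by simp
    qed
    also have "\<dots> = smult_chain (-1) (realize T (comb_power subdiv_comb n)) S"
      by (simp add: realize_def smult_chain_def comb_sum_comb_power_subdiv_comb sum_negf)
    finally show "(SD_cube n T S :: 'r) = smult_chain (-1) (realize T (comb_power subdiv_comb n)) S" .
  qed
qed

section \<open>Subdivision is homologous to a multiple of the identity\<close>

lemma words_of_comb_power:
  assumes "\<And>c f. (c, f) \<in> set X \<Longrightarrow> factor_into_unit f \<and> factor_dim f = 1"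
    and "(c, w) \<in> set (comb_power X n)"
  shows "word_into_unit w \<and> length w = n \<and> word_dim w = n"
proof -
  from set_comb_power[OF assms(2)] assms(1)
  have "length w = n" "\<And>f. f \<in> set w \<Longrightarrow> factor_into_unit f \<and> factor_dim f = 1"
    by auto
  then show ?thesis by (simp add: word_into_unit_def word_dim_of_dim_one)
qed

lemma words_of_comb_power_subdiv_comb:
  "(c, w) \<in> set (comb_power subdiv_comb n) \<Longrightarrow> word_into_unit w \<and> length w = n \<and> word_dim w = n"
  using factors_of_subdiv_comb by (rule words_of_comb_power)

lemma words_of_prism:
  fixes K :: "('r::comm_ring_1, factor) comb"
  assumes "subdiv_homotopy a b lam K" "(c, w) \<in> set (prism K n)"
  shows "word_into_unit w \<and> length w = n \<and> word_dim w = Suc n"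
  using assms(2)
proof (induction n arbitrary: c w)
  case (Suc n)
  then consider (head) "(c, w) \<in> set (comb_tensor K (comb_power id_comb n))"
    | (tail) d where "(d, w) \<in> set (comb_tensor subdiv_comb (prism K n))"
    by (auto dest: set_comb_smult)
  then show ?case
  proof cases
    case head
    then obtain c' f and d :: 'r and u where "(c', f) \<in> set K" "(d, u) \<in> set (comb_power id_comb n)" "w = f # u"
      using set_comb_tensor by blast
    with assms(1) words_of_comb_power[OF factors_of_id_comb] show ?thesis
      by (fastforce simp: subdiv_homotopy_def word_into_unit_def)
  next
    case tail
    then obtain c' :: 'r and f d' u where "(c', f) \<in> set subdiv_comb" "(d', u) \<in> set (prism K n)" "w = f # u"
      using set_comb_tensor by blast
    with Suc.IH factors_of_subdiv_comb show ?thesis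
      by (fastforce simp: word_into_unit_def)
  qed
qed simp

lemma bd_realize_prism:
  assumes K: "subdiv_homotopy a b lam K" and T: "T \<in> extensional (cube n)"
  shows "bd a b (Suc n) (realize T (prism K n)) = smult_chain lam (basis_chain T + SD_cube n T)
     + lin_ext (\<lambda>T'. smult_chain (-1) (realize T' (prism K (n - 1)))) (bd_cube a b n T)"
proof -
  have target: "realize T (comb_target_bd a b (prism K (n - 1))) =
      lin_ext (\<lambda>T'. realize T' (prism K (n - 1))) (bd_cube a b n T)"
  proof (cases n)
    case 0
    then show ?thesis by (simp add: comb_target_bd_def comb_bind_def bd_cube_0)
  next
    case (Suc m)
    then show ?thesis
      using words_of_prism[OF K] by (simp add: lin_ext_realize_bd_cube)
  qed
  have "bd a b (Suc n) (realize T (prism K n)) = realize T (comb_bd a b (prism K n))"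
    using words_of_prism[OF K] by (intro bd_realize) auto
  also have "\<dots> = realize T (comb_smult lam (comb_power id_comb n)
      @ comb_smult lam (comb_smult (-1) (comb_power subdiv_comb n))
      @ comb_smult (-1) (comb_target_bd a b (prism K (n - 1))))"
    by (rule realize_cong) (simp add: comb_bd_prism[OF K] algebra_simps)
  also have "\<dots> = smult_chain lam (realize T (comb_power id_comb n))
      + smult_chain lam (smult_chain (-1) (realize T (comb_power subdiv_comb n)))
      + smult_chain (-1) (realize T (comb_target_bd a b (prism K (n - 1))))"
    by (simp only: realize_append realize_comb_smult add.assoc)
  also have "\<dots> = smult_chain lam (basis_chain T + SD_cube n T)
     + lin_ext (\<lambda>T'. smult_chain (-1) (realize T' (prism K (n - 1)))) (bd_cube a b n T)"
    unfolding target realize_comb_power_id_comb[OF T] SD_cube_eq_realize[OF T, symmetric] lin_ext_fun_smult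
    by (simp add: smult_chain_def fun_eq_iff algebra_simps)
  finally show ?thesis .
qed

lemma extensional_of_bd_cube_support:
  assumes "bd_cube a b n T S \<noteq> 0"
  shows "S \<in> extensional (cube (n - 1))"
proof (rule ccontr)
  assume "S \<notin> extensional (cube (n - 1))"
  then have "S \<noteq> face n i j T" for i j by (auto simp: face_def)
  then have "bd_cube a b n T S = 0" by (simp add: bd_cube_def basis_chain_def)
  with assms show False by simp
qed

lemma bd_SD_cube:
  fixes T :: "(nat \<Rightarrow> real) \<Rightarrow> 'a" and a b :: "'r::comm_ring_1"
  assumes "n \<noteq> 0" "T \<in> extensional (cube n)"
  shows "bd a b n (SD_cube n T) = lin_ext (SD_cube (n - 1)) (bd_cube a b n T)"
proof -
  obtain m where n: "n = Suc m" using assms(1) by (cases n) auto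
  let ?S = "comb_power subdiv_comb"
  have dim_S: "\<And>c f. (c, f) \<in> set subdiv_comb \<Longrightarrow> factor_dim f = 1"
    using factors_of_subdiv_comb by blast
  have "bd a b n (realize T (?S n)) = realize T (comb_bd a b (?S n))"
    using assms(1) words_of_comb_power_subdiv_comb by (intro bd_realize) auto
  also have "\<dots> = realize T (comb_target_bd a b (?S m))"
    unfolding n by (intro realize_cong comb_bd_comb_power[OF factor_bd_subdiv_comb dim_S])
  also have "\<dots> = lin_ext (\<lambda>T'. realize T' (?S m)) (bd_cube a b n T)"
    unfolding n using words_of_comb_power_subdiv_comb
    by (intro lin_ext_realize_bd_cube[symmetric]) blast
  finally have "bd a b n (SD_cube n T) = lin_ext (\<lambda>T'. smult_chain (-1) (realize T' (?S m))) (bd_cube a b n T)"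
    by (simp add: SD_cube_eq_realize[OF assms(2)] bd_smult finite_support_realize lin_ext_fun_smult)
  also have "\<dots> = lin_ext (SD_cube (n - 1)) (bd_cube a b n T)"
  proof (rule lin_ext_cong)
    fix T' assume "bd_cube a b n T T' \<noteq> 0"
    then have "T' \<in> extensional (cube m)"
      using extensional_of_bd_cube_support n by fastforce
    then show "smult_chain (-1) (realize T' (?S m)) = SD_cube (n - 1) T'"
      by (simp add: SD_cube_eq_realize n)
  qed
  finally show ?thesis .
qed

lemma is_chain_SD:
  fixes u :: "('a, 'r::comm_ring_1) chain"
  assumes "is_chain X n u"
  shows "is_chain X n (SD n u)"
  unfolding SD_def
proof (rule is_chain_lin_ext[OF assms])
  fix T assume T: "T \<in> sing_cubes n X"
  have "is_chain X n (realize T (comb_power subdiv_comb n) :: ('a, 'r) chain)"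
    using words_of_comb_power_subdiv_comb by (intro is_chain_realize[OF T]) blast
  with T show "is_chain X n (SD_cube n T :: ('a, 'r) chain)"
    by (simp add: SD_cube_eq_realize sing_cubes_def is_chain_smult)
qed

lemma bd_SD_cycle:
  assumes v: "is_chain X n v" "bd a b n v = 0"
  shows "bd a b n (SD n v) = 0"
proof (cases "n = 0")
  case True
  then show ?thesis by (simp add: bd_def zero_fun_def)
next
  case False
  have "bd a b n (lin_ext (SD_cube n) v) = lin_ext (\<lambda>T. 0) v"
  proof (rule bd_lin_ext_of_cycle[where H' = "SD_cube (n - 1)"])
    fix T assume "v T \<noteq> 0"
    then have T: "T \<in> extensional (cube n)"
      by (rule is_chain_extensional[OF v(1)])
    then show "finite_support (SD_cube n T)"
      by (simp add: SD_cube_eq_realize finite_support_smult finite_support_realize)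
    from False T show "bd a b n (SD_cube n T) = 0 + lin_ext (SD_cube (n - 1)) (bd_cube a b n T)"
      by (simp add: bd_SD_cube)
  qed (use v False in \<open>simp_all add: is_chain_finite_support\<close>)
  then show ?thesis by (simp add: SD_def)
qed

lemma smult_add_SD_in_boundaries:
  assumes K: "subdiv_homotopy a b lam K" and v: "is_chain X n v" "bd a b n v = 0"
  shows "smult_chain lam (v + SD n v) \<in> boundaries X a b n"
proof -
  let ?H = "\<lambda>T. realize T (prism K n)"
  have "is_chain X (Suc n) (lin_ext ?H v)"
    using v(1) words_of_prism[OF K] by (intro is_chain_lin_ext is_chain_realize) auto
  moreover have "bd a b (Suc n) (lin_ext ?H v) = lin_ext (\<lambda>T. smult_chain lam (basis_chain T + SD_cube n T)) v"
  proof (rule bd_lin_ext_of_cycle)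
    fix T assume "v T \<noteq> 0"
    then have "T \<in> extensional (cube n)"
      by (rule is_chain_extensional[OF v(1)])
    with K show "bd a b (Suc n) (?H T) = smult_chain lam (basis_chain T + SD_cube n T) +
        lin_ext (\<lambda>T'. smult_chain (-1) (realize T' (prism K (n - 1)))) (bd_cube a b n T)"
      by (rule bd_realize_prism)
  qed (use v in \<open>simp_all add: is_chain_finite_support finite_support_realize\<close>)
  moreover have "lin_ext (\<lambda>T. smult_chain lam (basis_chain T + SD_cube n T)) v = smult_chain lam (v + SD n v)"
    using v by (simp add: lin_ext_fun_smult lin_ext_fun_add lin_ext_basis_chain_id is_chain_finite_support SD_def)
  ultimately show ?thesis
    by (metis bd_in_boundaries)
qed

lemma smult_SD_diff_in_boundaries:
  assumes "subdiv_homotopy a b lam K" "lam + mu = a + b" "is_chain X n v" "bd a b n v = 0"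
  shows "smult_chain lam (SD n v) - smult_chain mu v \<in> boundaries X a b n"
proof -
  have "smult_chain lam (SD n v) - smult_chain mu v = smult_chain lam (v + SD n v) - smult_chain (a + b) v"
    by (simp add: smult_chain_def fun_eq_iff algebra_simps flip: assms(2))
  then show ?thesis
    using assms by (simp add: diff_in_boundaries smult_add_SD_in_boundaries smult_add_weights_cycle_in_boundaries)
qed

lemma smult_SD_iterate_diff_in_boundaries:
  assumes "subdiv_homotopy a b lam K" "lam + mu = a + b" "is_chain X n u" "bd a b n u = 0"
  shows "smult_chain (lam ^ k) ((SD n ^^ k) u) - smult_chain (mu ^ k) u \<in> boundaries X a b n"
  using assms(3,4)
proof (induction k arbitrary: u)
  case 0
  have "smult_chain (lam ^ 0) ((SD n ^^ 0) u) - smult_chain (mu ^ 0) u = 0"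
    by (simp add: smult_chain_def fun_eq_iff)
  then show ?case by (simp only: zero_in_boundaries)
next
  case (Suc k)
  have "smult_chain lam (smult_chain (lam ^ k) ((SD n ^^ k) (SD n u)) - smult_chain (mu ^ k) (SD n u))
      + smult_chain (mu ^ k) (smult_chain lam (SD n u) - smult_chain mu u) \<in> boundaries X a b n"
    using Suc assms(1,2)
    by (intro add_in_boundaries smult_in_boundaries Suc.IH is_chain_SD bd_SD_cycle smult_SD_diff_in_boundaries)
  moreover have "smult_chain lam (smult_chain (lam ^ k) ((SD n ^^ k) (SD n u)) - smult_chain (mu ^ k) (SD n u))
      + smult_chain (mu ^ k) (smult_chain lam (SD n u) - smult_chain mu u)
    = smult_chain (lam ^ Suc k) ((SD n ^^ Suc k) u) - smult_chain (mu ^ Suc k) u"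
    by (simp add: smult_chain_def fun_eq_iff funpow_swap1 algebra_simps)
  ultimately show ?case by metis
qed

theorem lemma4:
  fixes X :: "'a topology" and a b :: "'r::comm_ring_1"
    and k n :: nat and u :: "('a,'r) chain"
  assumes "is_chain X n u" and "bd a b n u = (\<lambda>_. 0)"
  shows "hclass X a b n (smult_chain (a ^ k) ((SD n ^^ k) u)) = hclass X a b n (smult_chain (b ^ k) u)
       \<and> hclass X a b n (smult_chain (b ^ k) ((SD n ^^ k) u)) = hclass X a b n (smult_chain (a ^ k) u)"
proof -
  have cycle: "bd a b n u = 0"
    using assms(2) by (simp add: zero_fun_def)
  have "smult_chain (a ^ k) ((SD n ^^ k) u) - smult_chain (b ^ k) u \<in> boundaries X a b n"
    by (rule smult_SD_iterate_diff_in_boundaries[OF subdiv_homotopy_a]) (simp_all add: assms(1) cycle)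
  moreover have "smult_chain (b ^ k) ((SD n ^^ k) u) - smult_chain (a ^ k) u \<in> boundaries X a b n"
    by (rule smult_SD_iterate_diff_in_boundaries[OF subdiv_homotopy_b]) (simp_all add: assms(1) cycle)
  ultimately show ?thesis
    by (simp add: hclass_eq)
qed

end
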